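(* Let $h_1,h_2,h_3$ be germs of holomorphic functions at the origin of $\mathbb C^2$ and let $a$ be a positive integer. Set $\omega_i=dy+y^a h_i(x,y)\,dx$ for $i=1,2,3$ and $h_{ij}=h_i-h_j$, and assume that $y$ does not divide $h_{ij}$ for $i\ne j$. Then the curvature of the $3$-web defined by $\omega_1\omega_2\omega_3=0$ is holomorphic along $\{y=0\}$ if and only if $y^a$ divides $$\frac{\partial}{\partial x}\left(\frac{h_{12}\,\partial_x h_{23}-h_{23}\,\partial_x h_{12}}{h_{12}\,h_{23}\,h_{31}}\right).$$
   Context: Holomorphy "along $\{y=0\}$" and divisibility by $y^a$ are understood at generic points of $\{y=0\}$ near the origin (the displayed function is meromorphic and holomorphic at generic points of $\{y=0\}$; $y^a$ divides it means its quotient by $y^a$ is holomorphic there). The curvature of a $3$-web given by $1$-forms $\omega_1,\omega_2,\omega_3$ is defined off the discriminant as follows: rescale the forms to $\tilde\omega_i$ with $\tilde\omega_1+\tilde\omega_2+\tilde\omega_3=0$; there is a unique $1$-form $\eta$ with $d\tilde\omega_i=\eta\wedge\tilde\omega_i$ for all $i$, and the curvature is the $2$-form $d\eta$ (independent of choices); it is meromorphic with poles in the discriminant. *)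

theory Defs
  imports "HOL-Analysis.Analysis"
begin

definition holo2 :: "(complex \<times> complex \<Rightarrow> complex) \<Rightarrow> (complex \<times> complex) set \<Rightarrow> bool" where
  "holo2 f N \<longleftrightarrow> open N \<and> (\<forall>z\<in>N. \<exists>D. (f has_derivative D) (at z) \<and>
       (\<forall>c u v. D (c * u, c * v) = c * D (u, v)))"

definition px :: "(complex \<times> complex \<Rightarrow> complex) \<Rightarrow> complex \<times> complex \<Rightarrow> complex" where
  "px f z = deriv (\<lambda>t. f (t, snd z)) (fst z)"

definition py :: "(complex \<times> complex \<Rightarrow> complex) \<Rightarrow> complex \<times> complex \<Rightarrow> complex" where
  "py f z = deriv (\<lambda>t. f (fst z, t)) (snd z)"

text \<open>A 1-form P dx + Q dy is represented by the pair (P, Q);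
  a 2-form R dx/\<and>dy by its coefficient R.\<close>
type_synonym form1 = "(complex \<times> complex \<Rightarrow> complex) \<times> (complex \<times> complex \<Rightarrow> complex)"
type_synonym form2 = "complex \<times> complex \<Rightarrow> complex"

definition ext_d :: "form1 \<Rightarrow> form2" where
  "ext_d w = (\<lambda>z. px (snd w) z - py (fst w) z)"

definition wedge :: "form1 \<Rightarrow> form1 \<Rightarrow> form2" where
  "wedge u w = (\<lambda>z. fst u z * snd w z - snd u z * fst w z)"

definition scale_form :: "(complex \<times> complex \<Rightarrow> complex) \<Rightarrow> form1 \<Rightarrow> form1" where
  "scale_form l w = ((\<lambda>z. l z * fst w z), (\<lambda>z. l z * snd w z))"

text \<open>K is the curvature of the 3-web given by w1, w2, w3 on the open set V
  (lying off the discriminant): locally on V one can rescale the forms by nonvanishing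
  holomorphic functions so that they sum to zero, there is a holomorphic 1-form eta
  with d(l_i w_i) = eta /\<and> (l_i w_i), and K = d eta.\<close>
definition web_curvature :: "(complex \<times> complex) set \<Rightarrow> form1 \<Rightarrow> form1 \<Rightarrow> form1 \<Rightarrow> form2 \<Rightarrow> bool" where
  "web_curvature V w1 w2 w3 K \<longleftrightarrow>
     (\<forall>p\<in>V. \<exists>N l1 l2 l3 eta. open N \<and> p \<in> N \<and> N \<subseteq> V \<and>
        holo2 l1 N \<and> holo2 l2 N \<and> holo2 l3 N \<and>
        holo2 (fst eta) N \<and> holo2 (snd eta) N \<and>
        (\<forall>z\<in>N. l1 z \<noteq> 0 \<and> l2 z \<noteq> 0 \<and> l3 z \<noteq> 0) \<and>
        (\<forall>z\<in>N. fst (scale_form l1 w1) z + fst (scale_form l2 w2) z + fst (scale_form l3 w3) z = 0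
              \<and> snd (scale_form l1 w1) z + snd (scale_form l2 w2) z + snd (scale_form l3 w3) z = 0) \<and>
        (\<forall>z\<in>N. ext_d (scale_form l1 w1) z = wedge eta (scale_form l1 w1) z
              \<and> ext_d (scale_form l2 w2) z = wedge eta (scale_form l2 w2) z
              \<and> ext_d (scale_form l3 w3) z = wedge eta (scale_form l3 w3) z) \<and>
        (\<forall>z\<in>N. K z = ext_d eta z))"

text \<open>A function F, given on the (dense open) set V, is holomorphic at generic points of
  {y=0} near the origin: for all x0 in a small disc outside a finite set, F agrees on V near
  (x0,0) with a function holomorphic in a neighbourhood of (x0,0).\<close>
definition holo_along_y0 :: "(complex \<times> complex) set \<Rightarrow> (complex \<times> complex \<Rightarrow> complex) \<Rightarrow> bool" where
  "holo_along_y0 V F \<longleftrightarrow> (\<exists>r>0. \<exists>S. finite S \<and> (\<forall>x0. cmod x0 < r \<and> x0 \<notin> S \<longrightarrow>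
      (\<exists>e>0. \<exists>g. holo2 g (ball (x0, 0) e) \<and> (\<forall>z\<in>ball (x0, 0) e \<inter> V. F z = g z))))"

definition ypow_dvd_along_y0 :: "nat \<Rightarrow> (complex \<times> complex) set \<Rightarrow> (complex \<times> complex \<Rightarrow> complex) \<Rightarrow> bool" where
  "ypow_dvd_along_y0 a V F \<longleftrightarrow> (\<exists>r>0. \<exists>S. finite S \<and> (\<forall>x0. cmod x0 < r \<and> x0 \<notin> S \<longrightarrow>
      (\<exists>e>0. \<exists>g. holo2 g (ball (x0, 0) e) \<and> (\<forall>z\<in>ball (x0, 0) e \<inter> V. F z = (snd z) ^ a * g z))))"

definition y_dvd_germ :: "(complex \<times> complex \<Rightarrow> complex) \<Rightarrow> bool" where
  "y_dvd_germ f \<longleftrightarrow> (\<exists>e>0. \<exists>g. holo2 g (ball 0 e) \<and> (\<forall>z\<in>ball 0 e. f z = snd z * g z))"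

end

(*
  Rescaling \<omega>1, \<omega>2, \<omega>3 by h23, h31, h12 makes them sum to zero, and the structure equations
  d\<omega>i' = \<eta> \<and> \<omega>i' become linear in \<eta> = P dx + Q dy and can be solved explicitly. Any other
  normalization differs by a common nonvanishing factor \<mu>; it changes \<eta> by d log \<mu> and leaves
  d\<eta> unchanged, so the curvature is \<partial>x Q - \<partial>y P. Expanding the solution gives
  Q = B + a/y + G/y^a, where G is the quotient in the statement and B and P are holomorphic
  wherever no hij vanishes, also across y = 0. Hence the curvature is \<partial>x G / y^a plus a function
  that is holomorphic near every point of {y = 0} off the zeros of the hij on the axis (finitely
  many, because y does not divide hij), and it is holomorphic there iff y^a divides \<partial>x G.

  Holomorphy in two variables is handled through continuity plus holomorphy in each variable
  separately (Osgood's lemma); Cauchy estimates on the slices show that this class is closed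
  under partial differentiation and that mixed partial derivatives commute.
*)

theory Submission
  imports Defs "HOL-Complex_Analysis.Complex_Analysis"
begin

section \<open>Separately holomorphic functions\<close>

text \<open>By Osgood's lemma (\<open>sep_holo_imp_holo2\<close>, \<open>holo2_imp_sep_holo\<close>) this is equivalent to
  \<open>holo2\<close>, but closure under partial differentiation is easier to see for it.\<close>

definition sep_holo :: "(complex \<times> complex \<Rightarrow> complex) \<Rightarrow> (complex \<times> complex) set \<Rightarrow> bool" where
  "sep_holo f N \<longleftrightarrow> open N \<and> continuous_on N f \<and>
     (\<forall>(x, y)\<in>N. (\<lambda>t. f (t, y)) field_differentiable at x \<and> (\<lambda>t. f (x, t)) field_differentiable at y)"

lemma sep_holoI:
  assumes "open N" "continuous_on N f"
    "\<And>x y. (x, y) \<in> N \<Longrightarrow> (\<lambda>t. f (t, y)) field_differentiable at x"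
    "\<And>x y. (x, y) \<in> N \<Longrightarrow> (\<lambda>t. f (x, t)) field_differentiable at y"
  shows "sep_holo f N"
  using assms by (auto simp: sep_holo_def)

lemma
  assumes "sep_holo f N"
  shows sep_holo_open: "open N" and sep_holo_continuous: "continuous_on N f"
    and sep_holo_differentiable_x: "(x, y) \<in> N \<Longrightarrow> (\<lambda>t. f (t, y)) field_differentiable at x"
    and sep_holo_differentiable_y: "(x, y) \<in> N \<Longrightarrow> (\<lambda>t. f (x, t)) field_differentiable at y"
  using assms by (auto simp: sep_holo_def)

lemma sep_holo_subset: "sep_holo f N \<Longrightarrow> open M \<Longrightarrow> M \<subseteq> N \<Longrightarrow> sep_holo f M"
  unfolding sep_holo_def by (auto intro: continuous_on_subset)

lemma sep_holo_const: "open N \<Longrightarrow> sep_holo (\<lambda>z. c) N"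
  by (auto simp: sep_holo_def)

lemma sep_holo_snd: "open N \<Longrightarrow> sep_holo snd N"
  by (auto simp: sep_holo_def intro!: continuous_intros field_differentiable_ident)

lemma sep_holo_add: "sep_holo f N \<Longrightarrow> sep_holo g N \<Longrightarrow> sep_holo (\<lambda>z. f z + g z) N"
  by (auto simp: sep_holo_def intro!: continuous_intros field_differentiable_add)

lemma sep_holo_diff: "sep_holo f N \<Longrightarrow> sep_holo g N \<Longrightarrow> sep_holo (\<lambda>z. f z - g z) N"
  by (auto simp: sep_holo_def intro!: continuous_intros field_differentiable_diff)

lemma sep_holo_mult: "sep_holo f N \<Longrightarrow> sep_holo g N \<Longrightarrow> sep_holo (\<lambda>z. f z * g z) N"
  by (auto simp: sep_holo_def intro!: continuous_intros field_differentiable_mult)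

lemma sep_holo_divide:
  "sep_holo f N \<Longrightarrow> sep_holo g N \<Longrightarrow> (\<And>z. z \<in> N \<Longrightarrow> g z \<noteq> 0) \<Longrightarrow> sep_holo (\<lambda>z. f z / g z) N"
  by (auto simp: sep_holo_def intro!: continuous_intros field_differentiable_divide)

lemma sep_holo_power: "sep_holo f N \<Longrightarrow> sep_holo (\<lambda>z. f z ^ n) N"
  by (induction n) (auto intro: sep_holo_const sep_holo_mult sep_holo_open)

lemma open_slice_x: "open (N :: (complex \<times> complex) set) \<Longrightarrow> open {t. (t, y) \<in> N}"
  using continuous_open_vimage[of N "\<lambda>t. (t, y)"] by (auto simp: vimage_def intro: continuous_intros)

lemma open_slice_y: "open (N :: (complex \<times> complex) set) \<Longrightarrow> open {t. (x, t) \<in> N}"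
  using continuous_open_vimage[of N "\<lambda>t. (x, t)"] by (auto simp: vimage_def intro: continuous_intros)

lemma sep_holo_holomorphic_x: "sep_holo f N \<Longrightarrow> (\<lambda>t. f (t, y)) holomorphic_on {t. (t, y) \<in> N}"
  by (auto simp: holomorphic_on_def intro: field_differentiable_at_within sep_holo_differentiable_x)

lemma sep_holo_holomorphic_y: "sep_holo f N \<Longrightarrow> (\<lambda>t. f (x, t)) holomorphic_on {t. (x, t) \<in> N}"
  by (auto simp: holomorphic_on_def intro: field_differentiable_at_within sep_holo_differentiable_y)

lemma sep_holo_has_derivative_x:
  "sep_holo f N \<Longrightarrow> (x, y) \<in> N \<Longrightarrow> ((\<lambda>t. f (t, y)) has_field_derivative px f (x, y)) (at x)"
  unfolding px_def by (simp add: DERIV_deriv_iff_field_differentiable sep_holo_differentiable_x)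

lemma sep_holo_has_derivative_y:
  "sep_holo f N \<Longrightarrow> (x, y) \<in> N \<Longrightarrow> ((\<lambda>t. f (x, t)) has_field_derivative py f (x, y)) (at y)"
  unfolding py_def by (simp add: DERIV_deriv_iff_field_differentiable sep_holo_differentiable_y)

lemma sep_holo_swap:
  assumes "sep_holo f N" shows "sep_holo (f \<circ> prod.swap) (prod.swap -` N)"
proof (rule sep_holoI)
  show "open (prod.swap -` N)"
    by (rule continuous_open_vimage[OF sep_holo_open[OF assms]]) (auto intro: continuous_intros)
  show "continuous_on (prod.swap -` N) (f \<circ> prod.swap)"
    by (rule continuous_on_compose)
      (auto intro: continuous_intros continuous_on_subset[OF sep_holo_continuous[OF assms]])
qed (use assms in \<open>auto intro: sep_holo_differentiable_x sep_holo_differentiable_y\<close>)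

lemma py_eq_px_swap: "py f z = px (f \<circ> prod.swap) (prod.swap z)"
  by (simp add: px_def py_def)

lemma open_nonvanishing: "sep_holo f N \<Longrightarrow> open (N \<inter> f -` (- {0}))"
  by (intro continuous_open_preimage sep_holo_continuous sep_holo_open) auto

section \<open>Osgood's lemma\<close>

lemma polydisc_in_open:
  assumes "open N" "(x0, y0) \<in> N" "c > 0"
  obtains R where "R > 0" "cball x0 (c * R) \<times> cball y0 (c * R) \<subseteq> N"
proof -
  obtain e where e: "e > 0" "ball (x0, y0) e \<subseteq> N"
    using assms open_contains_ball by blast
  define R where "R = e / (3 * c)"
  have "cball x0 (c * R) \<times> cball y0 (c * R) \<subseteq> ball (x0, y0) e"
  proof clarify
    fix x y assume "x \<in> cball x0 (c * R)" "y \<in> cball y0 (c * R)"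
    then have "dist x0 x \<le> e / 3" "dist y0 y \<le> e / 3"
      using assms(3) by (simp_all add: R_def)
    then have "dist (x0, y0) (x, y) \<le> e / 3 + e / 3"
      unfolding dist_Pair_Pair by (smt (verit) real_sqrt_sum_squares_triangle_ineq sqrt_sum_squares_le_sum_abs zero_le_dist)
    then show "(x, y) \<in> ball (x0, y0) e" using e by simp
  qed
  then show ?thesis using that[of R] e assms(3) by (auto simp: R_def)
qed

lemma holomorphic_taylor_bounds:
  fixes g :: "complex \<Rightarrow> complex"
  assumes hol: "g holomorphic_on S" "open S" and sub: "cball x0 (2 * R) \<subseteq> S" and R: "R > 0"
    and bound: "\<And>t. t \<in> cball x0 (2 * R) \<Longrightarrow> cmod (g t) \<le> M"
    and x: "x \<in> cball x0 R" "x' \<in> cball x0 R"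
  shows "cmod (g x' - g x - deriv g x * (x' - x)) \<le> 2 * M / R ^ 2 * cmod (x' - x) ^ 2"
    and "cmod (deriv g x' - deriv g x) \<le> 2 * M / R ^ 2 * cmod (x' - x)"
proof -
  define B where "B = 2 * M / R ^ 2"
  have hol': "deriv g holomorphic_on S"
    using holomorphic_deriv[OF hol] .
  have inS: "cball x0 R \<subseteq> S"
    using sub R by (meson cball_subset_cball_iff order_trans linorder_not_le mult_le_cancel_right1
        order_refl one_le_numeral)
  have d0: "(g has_field_derivative deriv g t) (at t within cball x0 R)" if "t \<in> cball x0 R" for t
    using hol inS that by (meson has_field_derivative_at_within holomorphic_derivI subsetD)
  have d1: "(deriv g has_field_derivative deriv (deriv g) t) (at t within cball x0 R)"
    if "t \<in> cball x0 R" for t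
    using hol' hol(2) inS that by (meson has_field_derivative_at_within holomorphic_derivI subsetD)
  have d2: "cmod (deriv (deriv g) u) \<le> B" if u: "u \<in> cball x0 R" for u
  proof -
    have cb: "cball u R \<subseteq> cball x0 (2 * R)"
      using u by (intro cball_subset_cball_iff[THEN iffD2]) (auto simp: dist_commute)
    have "cmod ((deriv ^^ 2) g u) \<le> fact 2 * M / R ^ 2"
    proof (rule Cauchy_inequality)
      show "g holomorphic_on ball u R"
        using hol(1) sub cb ball_subset_cball by (meson holomorphic_on_subset order_trans)
      show "continuous_on (cball u R) g"
        using holomorphic_on_imp_continuous_on hol(1) sub cb continuous_on_subset by blast
      show "\<And>t. cmod (u - t) = R \<Longrightarrow> cmod (g t) \<le> M"
        using bound cb by (auto simp: dist_norm)
    qed (rule R)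
    then show ?thesis by (simp add: B_def numeral_2_eq_2)
  qed
  define F where "F = (\<lambda>i::nat. if i = 0 then g else if i = 1 then deriv g else deriv (deriv g))"
  have "cmod (F 0 x' - (\<Sum>i\<le>1. F i x * (x' - x) ^ i / fact i)) \<le> B * cmod (x' - x) ^ Suc 1 / fact 1"
  proof (rule complex_Taylor[of "cball x0 R"])
    fix i :: nat and t assume "t \<in> cball x0 R" "i \<le> 1"
    then show "(F i has_field_derivative F (Suc i) t) (at t within cball x0 R)"
      using d0 d1 by (cases i) (auto simp: F_def)
  qed (use d2 x in \<open>auto simp: F_def\<close>)
  then show "cmod (g x' - g x - deriv g x * (x' - x)) \<le> B * cmod (x' - x) ^ 2"
    by (simp add: F_def diff_diff_eq power2_eq_square)
  show "cmod (deriv g x' - deriv g x) \<le> B * cmod (x' - x)"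
    by (rule field_differentiable_bound[of "cball x0 R"]) (use d1 d2 x in auto)
qed

lemma sep_holo_local_bounds_x:
  assumes f: "sep_holo f N" and z0: "(x0, y0) \<in> N"
  obtains R B where "R > 0" "B \<ge> 0" "cball x0 R \<times> cball y0 R \<subseteq> N"
    "\<And>x x' y. x \<in> cball x0 R \<Longrightarrow> x' \<in> cball x0 R \<Longrightarrow> y \<in> cball y0 R \<Longrightarrow>
        cmod (f (x', y) - f (x, y) - px f (x, y) * (x' - x)) \<le> B * cmod (x' - x) ^ 2"
    "\<And>x x' y. x \<in> cball x0 R \<Longrightarrow> x' \<in> cball x0 R \<Longrightarrow> y \<in> cball y0 R \<Longrightarrow>
        cmod (px f (x', y) - px f (x, y)) \<le> B * cmod (x' - x)"
proof -
  obtain R where R: "R > 0" and P: "cball x0 (2 * R) \<times> cball y0 (2 * R) \<subseteq> N"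
    using polydisc_in_open[OF sep_holo_open[OF f] z0, of 2] by auto
  have "compact (cball x0 (2 * R) \<times> cball y0 (2 * R))"
    by (intro compact_Times compact_cball)
  then have "bounded (f ` (cball x0 (2 * R) \<times> cball y0 (2 * R)))"
    using P sep_holo_continuous[OF f]
    by (meson compact_continuous_image compact_imp_bounded continuous_on_subset)
  then obtain M where M: "\<And>z. z \<in> cball x0 (2 * R) \<times> cball y0 (2 * R) \<Longrightarrow> cmod (f z) \<le> M"
    by (auto simp: bounded_iff)
  have small: "cball x0 R \<times> cball y0 R \<subseteq> N"
    using P R by (auto simp: dist_commute)
  have "cmod (f (x', y) - f (x, y) - px f (x, y) * (x' - x)) \<le> 2 * M / R ^ 2 * cmod (x' - x) ^ 2 \<and>
        cmod (px f (x', y) - px f (x, y)) \<le> 2 * M / R ^ 2 * cmod (x' - x)"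
    if "x \<in> cball x0 R" "x' \<in> cball x0 R" "y \<in> cball y0 R" for x x' y
  proof -
    have "cball x0 (2 * R) \<subseteq> {t. (t, y) \<in> N}"
      using P that(3) R by (auto simp: dist_commute)
    moreover have "cmod (f (t, y)) \<le> M" if "t \<in> cball x0 (2 * R)" for t
      using M \<open>y \<in> cball y0 R\<close> R that by (auto simp: dist_commute)
    ultimately show ?thesis
      using holomorphic_taylor_bounds[OF sep_holo_holomorphic_x[OF f] open_slice_x[OF sep_holo_open[OF f]]
          _ R _ that(1,2), where M=M]
      by (simp add: px_def)
  qed
  moreover have "M \<ge> 0"
    using M[of "(x0, y0)"] R by (auto intro: order_trans[OF norm_ge_zero])
  then have "2 * M / R ^ 2 \<ge> 0"
    by simp
  ultimately show ?thesis using that[OF R _ small] by blast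
qed

lemma uniform_limit_diff_quotient_x:
  assumes taylor: "\<And>x' y. x' \<in> cball x1 R \<Longrightarrow> y \<in> Y \<Longrightarrow>
        cmod (f (x', y) - f (x1, y) - px f (x1, y) * (x' - x1)) \<le> B * cmod (x' - x1) ^ 2"
    and d: "d \<longlonglongrightarrow> 0" "\<And>n. d n \<noteq> 0" "\<And>n. x1 + d n \<in> cball x1 R"
  shows "uniform_limit Y (\<lambda>n y. (f (x1 + d n, y) - f (x1, y)) / d n) (\<lambda>y. px f (x1, y)) sequentially"
proof (rule uniform_limitI)
  fix e :: real assume "e > 0"
  have "(\<lambda>n. B * cmod (d n)) \<longlonglongrightarrow> B * 0"
    using d(1) by (intro tendsto_mult tendsto_const tendsto_norm_zero)
  then have "\<forall>\<^sub>F n in sequentially. B * cmod (d n) < e"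
    using \<open>e > 0\<close> by (auto dest: order_tendstoD(2))
  then show "\<forall>\<^sub>F n in sequentially. \<forall>y\<in>Y. dist ((f (x1 + d n, y) - f (x1, y)) / d n) (px f (x1, y)) < e"
  proof (rule eventually_mono, intro ballI)
    fix n y assume small: "B * cmod (d n) < e" and y: "y \<in> Y"
    have "(f (x1 + d n, y) - f (x1, y)) / d n - px f (x1, y) =
        (f (x1 + d n, y) - f (x1, y) - px f (x1, y) * (x1 + d n - x1)) / d n"
      using d(2)[of n] by (simp add: field_simps)
    then have "dist ((f (x1 + d n, y) - f (x1, y)) / d n) (px f (x1, y)) \<le> B * cmod (d n) ^ 2 / cmod (d n)"
      using taylor[OF d(3) y] by (simp add: dist_norm norm_divide divide_right_mono)
    also have "\<dots> = B * cmod (d n)"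
      using d(2)[of n] by (simp add: power2_eq_square)
    finally show "dist ((f (x1 + d n, y) - f (x1, y)) / d n) (px f (x1, y)) < e"
      using small by linarith
  qed
qed

lemma LIMSEQ_of_real_divide_Suc: "(\<lambda>n. complex_of_real (R / Suc n)) \<longlonglongrightarrow> 0"
  using tendsto_of_real[OF LIMSEQ_Suc[OF lim_const_over_n[of R]]] by (simp only: of_real_0)

text \<open>\<open>px f (x1, \<cdot>)\<close> is a uniform limit of holomorphic difference quotients in \<open>x\<close>; the
  limit of their \<open>y\<close>-derivatives identifies \<open>py (px f)\<close> with \<open>px (py f)\<close>.\<close>

lemma sep_holo_px_slice_y:
  assumes f: "sep_holo f N" and z1: "(x1, y1) \<in> N"
  obtains R g' where "R > 0" "continuous_on (cball y1 R) (\<lambda>y. px f (x1, y))"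
    "\<And>w. w \<in> ball y1 R \<Longrightarrow> ((\<lambda>y. px f (x1, y)) has_field_derivative g' w) (at w)"
    "(\<lambda>n. (py f (x1 + of_real (R / Suc n), y1) - py f (x1, y1)) / of_real (R / Suc n)) \<longlonglongrightarrow> g' y1"
proof -
  obtain R B where R: "R > 0" "cball x1 R \<times> cball y1 R \<subseteq> N"
    and taylor: "\<And>x x' y. x \<in> cball x1 R \<Longrightarrow> x' \<in> cball x1 R \<Longrightarrow> y \<in> cball y1 R \<Longrightarrow>
        cmod (f (x', y) - f (x, y) - px f (x, y) * (x' - x)) \<le> B * cmod (x' - x) ^ 2"
    using sep_holo_local_bounds_x[OF f z1] by metis
  define d where "d n = complex_of_real (R / Suc n)" for n
  have d0: "d \<longlonglongrightarrow> 0"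
    unfolding d_def by (rule LIMSEQ_of_real_divide_Suc)
  have dnz: "d n \<noteq> 0" for n
    unfolding d_def of_real_eq_0_iff using R by simp
  have dnorm: "cmod (d n) = R / Suc n" for n
    unfolding d_def norm_of_real using R by simp
  have din: "x1 + d n \<in> cball x1 R" for n
    using R by (simp add: dist_norm dnorm divide_le_eq del: of_nat_Suc)
  define F where "F n y = (f (x1 + d n, y) - f (x1, y)) / d n" for n y
  define F' where "F' n y = (py f (x1 + d n, y) - py f (x1, y)) / d n" for n y
  have ulim: "uniform_limit (cball y1 R) F (\<lambda>y. px f (x1, y)) sequentially"
    unfolding F_def using R by (intro uniform_limit_diff_quotient_x[OF taylor d0 dnz din]) auto
  have quotients: "continuous_on (cball y1 R) (F n) \<and> (\<forall>w\<in>ball y1 R. (F n has_field_derivative F' n w) (at w))"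
    for n
  proof -
    have slices: "(x1 + d n, w) \<in> N" "(x1, w) \<in> N" if "w \<in> cball y1 R" for w
      using R din that by auto
    have "continuous_on (cball y1 R) (\<lambda>t. f (x, t))" if "\<And>w. w \<in> cball y1 R \<Longrightarrow> (x, w) \<in> N" for x
      by (rule continuous_on_subset[OF holomorphic_on_imp_continuous_on[OF sep_holo_holomorphic_y[OF f]]])
        (use that in auto)
    then show ?thesis
      unfolding F_def F'_def using slices dnz
      by (auto intro!: continuous_intros derivative_eq_intros sep_holo_has_derivative_y[OF f])
  qed
  obtain g' where cont: "continuous_on (cball y1 R) (\<lambda>y. px f (x1, y))"
    and der: "\<And>w. w \<in> ball y1 R \<Longrightarrow>
      ((\<lambda>y. px f (x1, y)) has_field_derivative g' w) (at w) \<and> (\<lambda>n. F' n w) \<longlonglongrightarrow> g' w"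
    by (rule has_complex_derivative_uniform_limit[OF _ ulim _ R(1), where f'=F'])
      (use quotients in \<open>auto intro: always_eventually\<close>)
  have "y1 \<in> ball y1 R"
    using R by simp
  then show ?thesis
    using that[OF R(1) cont] der unfolding F'_def d_def by blast
qed

lemma isCont_if_close_to_continuous:
  fixes g c :: "'a::metric_space \<Rightarrow> 'b::real_normed_vector"
  assumes c: "isCont c z" and eq: "g z = c z" and r: "r > 0"
    and close: "\<And>w. w \<in> ball z r \<Longrightarrow> norm (g w - c w) \<le> B * dist w z"
  shows "isCont g z"
proof -
  have "eventually (\<lambda>w. norm (g w - c w) \<le> B * dist w z) (at z)"
    using eventually_at_ball[OF r, of z UNIV] by (rule eventually_mono) (use close in auto)
  moreover have "((\<lambda>w. B * dist w z) \<longlongrightarrow> B * dist z z) (at z)"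
    by (intro tendsto_intros)
  ultimately have "((\<lambda>w. g w - c w) \<longlongrightarrow> 0) (at z)"
    by (simp add: Lim_null_comparison)
  then have "((\<lambda>w. (g w - c w) + c w) \<longlongrightarrow> 0 + c z) (at z)"
    using c by (intro tendsto_add) (auto simp: isCont_def)
  then show ?thesis
    using eq by (simp add: isCont_def)
qed

lemma sep_holo_continuous_px:
  assumes f: "sep_holo f N" shows "continuous_on N (px f)"
proof (clarsimp simp: continuous_on_eq_continuous_at[OF sep_holo_open[OF f]])
  fix x1 y1 assume z1: "(x1, y1) \<in> N"
  obtain R B where R: "R > 0" and
    lip: "\<And>x x' y. x \<in> cball x1 R \<Longrightarrow> x' \<in> cball x1 R \<Longrightarrow> y \<in> cball y1 R \<Longrightarrow>
        cmod (px f (x', y) - px f (x, y)) \<le> B * cmod (x' - x)"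
    and B: "B \<ge> 0"
    using sep_holo_local_bounds_x[OF f z1] by metis
  obtain R' where "R' > 0" "continuous_on (cball y1 R') (\<lambda>y. px f (x1, y))"
    using sep_holo_px_slice_y[OF f z1] by metis
  then have "isCont (\<lambda>y. px f (x1, y)) y1"
    by (intro continuous_on_interior[of "cball y1 R'"]) auto
  then have "isCont (\<lambda>w. px f (x1, snd w)) (x1, y1)"
    using isCont_o2[OF isCont_snd[OF continuous_ident], where a="(x1, y1)" and g="\<lambda>y. px f (x1, y)"]
    by simp
  then show "isCont (px f) (x1, y1)"
  proof (rule isCont_if_close_to_continuous[OF _ _ R])
    fix w assume "w \<in> ball (x1, y1) R"
    then have "dist w (x1, y1) < R"
      by (simp add: dist_commute)
    moreover obtain x y where w: "w = (x, y)"
      by (cases w)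
    moreover have "dist x x1 \<le> dist w (x1, y1)" "dist y y1 \<le> dist w (x1, y1)"
      using dist_fst_le[of w "(x1, y1)"] dist_snd_le[of w "(x1, y1)"] w by simp_all
    ultimately have near: "cmod (x - x1) \<le> dist w (x1, y1)" "cmod (x - x1) \<le> R" "cmod (y - y1) \<le> R"
      by (simp_all add: dist_norm)
    then have "cmod (px f (x, y) - px f (x1, y)) \<le> B * cmod (x - x1)"
      using R by (intro lip) (auto simp: dist_norm norm_minus_commute)
    also have "\<dots> \<le> B * dist w (x1, y1)"
      using near(1) B by (rule mult_left_mono)
    finally show "cmod (px f w - px f (x1, snd w)) \<le> B * dist w (x1, y1)"
      using w by simp
  qed simp
qed

lemma sep_holo_px:
  assumes f: "sep_holo f N" shows "sep_holo (px f) N"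
proof (rule sep_holoI[OF sep_holo_open[OF f] sep_holo_continuous_px[OF f]])
  fix x y assume z: "(x, y) \<in> N"
  have "deriv (\<lambda>t. f (t, y)) holomorphic_on {t. (t, y) \<in> N}"
    by (rule holomorphic_deriv[OF sep_holo_holomorphic_x[OF f] open_slice_x[OF sep_holo_open[OF f]]])
  then show "(\<lambda>t. px f (t, y)) field_differentiable at x"
    using z open_slice_x[OF sep_holo_open[OF f]] by (auto simp: px_def holomorphic_on_imp_differentiable_at)
  obtain R g' where "R > 0" "\<And>w. w \<in> ball y R \<Longrightarrow> ((\<lambda>t. px f (x, t)) has_field_derivative g' w) (at w)"
    using sep_holo_px_slice_y[OF f z] by metis
  then show "(\<lambda>t. px f (x, t)) field_differentiable at y"
    unfolding field_differentiable_def by (meson centre_in_ball)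
qed

lemma sep_holo_py:
  assumes f: "sep_holo f N" shows "sep_holo (py f) N"
proof -
  have "sep_holo (px (f \<circ> prod.swap) \<circ> prod.swap) (prod.swap -` (prod.swap -` N))"
    by (intro sep_holo_swap sep_holo_px assms)
  moreover have "px (f \<circ> prod.swap) \<circ> prod.swap = py f"
    by (auto simp: py_eq_px_swap)
  ultimately show ?thesis
    by (simp add: vimage_def)
qed

lemma sep_holo_has_derivative:
  assumes f: "sep_holo f N" and z0: "(x0, y0) \<in> N"
  shows "(f has_derivative (\<lambda>(u, v). px f (x0, y0) * u + py f (x0, y0) * v)) (at (x0, y0))"
proof -
  obtain r where r: "r > 0" "cball x0 (1 * r) \<times> cball y0 (1 * r) \<subseteq> N"
    using polydisc_in_open[OF sep_holo_open[OF f] z0, of 1] by auto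
  define X where "X = ball x0 r"
  define Y where "Y = ball y0 r"
  have XY: "X \<times> Y \<subseteq> N"
    using r ball_subset_cball by (fastforce simp: X_def Y_def)
  have "((\<lambda>(x, y). f (x, y)) has_derivative
      (\<lambda>(u, v). px f (x0, y0) * u + blinfun_mult_right (py f (x0, y0)) v)) (at (x0, y0) within X \<times> Y)"
  proof (rule has_derivative_partialsI)
    show "((\<lambda>x. f (x, y0)) has_derivative (*) (px f (x0, y0))) (at x0 within X)"
      using sep_holo_has_derivative_x[OF f z0]
      by (simp add: has_field_derivative_def has_derivative_at_withinI)
    show "((\<lambda>y. f (x, y)) has_derivative blinfun_apply (blinfun_mult_right (py f (x, y)))) (at y within Y)"
      if "x \<in> X" "y \<in> Y" for x y
      using sep_holo_has_derivative_y[OF f, of x y] that XY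
      by (auto simp: has_field_derivative_def intro: has_derivative_at_withinI)
    have "isCont (py f) (x0, y0)"
      using sep_holo_continuous[OF sep_holo_py[OF f]] sep_holo_open[OF f] z0
      by (simp add: continuous_on_eq_continuous_at)
    then have "isCont (\<lambda>z. blinfun_mult_right (py f z)) (x0, y0)"
      by (intro continuous_intros)
    then show "continuous (at (x0, y0) within X \<times> Y) (\<lambda>(x, y). blinfun_mult_right (py f (x, y)))"
      by (simp add: continuous_at_imp_continuous_within case_prod_beta')
    show "y0 \<in> Y" "convex Y"
      using r by (auto simp: Y_def)
  qed
  moreover have "at (x0, y0) within X \<times> Y = at (x0, y0)"
    using r by (intro at_within_open) (auto simp: X_def Y_def open_Times)
  ultimately show ?thesis
    by (simp add: case_prod_beta')
qed

theorem sep_holo_imp_holo2: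
  assumes f: "sep_holo f N" shows "holo2 f N"
  unfolding holo2_def
proof (intro conjI ballI sep_holo_open[OF f])
  fix z assume "z \<in> N"
  then obtain x0 y0 where "z = (x0, y0)" "(x0, y0) \<in> N"
    by (cases z) auto
  then show "\<exists>D. (f has_derivative D) (at z) \<and> (\<forall>c u v. D (c * u, c * v) = c * D (u, v))"
    using sep_holo_has_derivative[OF f] by (intro exI conjI) (auto simp: algebra_simps)
qed

lemma holo2_imp_sep_holo:
  assumes h: "holo2 f N" shows "sep_holo f N"
proof (rule sep_holoI)
  show "open N"
    using h by (simp add: holo2_def)
  show "continuous_on N f"
    using h unfolding holo2_def by (meson continuous_at_imp_continuous_on has_derivative_continuous)
  fix x y assume "(x, y) \<in> N"
  then obtain D where D: "(f has_derivative D) (at (x, y))" and lin: "\<forall>c u v. D (c * u, c * v) = c * D (u, v)"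
    using h unfolding holo2_def by blast
  have "((\<lambda>t. (t, y)) has_derivative (\<lambda>u. (u, 0))) (at x)"
    by (auto intro!: derivative_eq_intros)
  from diff_chain_at[OF this D] have "((\<lambda>t. f (t, y)) has_derivative (\<lambda>u. D (u, 0))) (at x)"
    by (simp add: o_def)
  moreover have "(\<lambda>u. D (u, 0)) = (*) (D (1, 0))"
  proof
    fix u show "D (u, 0) = D (1, 0) * u"
      using lin[rule_format, of u 1 0] by (simp add: mult.commute)
  qed
  ultimately show "(\<lambda>t. f (t, y)) field_differentiable at x"
    unfolding field_differentiable_def has_field_derivative_def by metis
  have "((\<lambda>t. (x, t)) has_derivative (\<lambda>v. (0, v))) (at y)"
    by (auto intro!: derivative_eq_intros)
  from diff_chain_at[OF this D] have "((\<lambda>t. f (x, t)) has_derivative (\<lambda>v. D (0, v))) (at y)"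
    by (simp add: o_def)
  moreover have "(\<lambda>v. D (0, v)) = (*) (D (0, 1))"
  proof
    fix v show "D (0, v) = D (0, 1) * v"
      using lin[rule_format, of v 0 1] by (simp add: mult.commute)
  qed
  ultimately show "(\<lambda>t. f (x, t)) field_differentiable at y"
    unfolding field_differentiable_def has_field_derivative_def by metis
qed

lemma filterlim_at_shrinking_offset:
  "R \<noteq> 0 \<Longrightarrow> filterlim (\<lambda>n. x + complex_of_real (R / Suc n)) (at x) sequentially"
proof (rule filterlim_atI)
  show "(\<lambda>n. x + complex_of_real (R / Suc n)) \<longlonglongrightarrow> x"
    using tendsto_add[OF tendsto_const[of x] LIMSEQ_of_real_divide_Suc[of R]] by simp
qed (simp del: of_nat_Suc)

lemma py_px_commute:
  assumes f: "sep_holo f N" and z: "(x1, y1) \<in> N"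
  shows "py (px f) (x1, y1) = px (py f) (x1, y1)"
proof -
  obtain R g' where R: "R > 0" and "continuous_on (cball y1 R) (\<lambda>y. px f (x1, y))"
    and der: "\<And>w. w \<in> ball y1 R \<Longrightarrow> ((\<lambda>y. px f (x1, y)) has_field_derivative g' w) (at w)"
    and lim: "(\<lambda>n. (py f (x1 + of_real (R / Suc n), y1) - py f (x1, y1)) / of_real (R / Suc n)) \<longlonglongrightarrow> g' y1"
    using sep_holo_px_slice_y[OF f z] by blast
  have "y1 \<in> ball y1 R"
    using R by simp
  then have "py (px f) (x1, y1) = g' y1"
    using DERIV_imp_deriv[OF der] unfolding py_def by simp
  moreover
  have "((\<lambda>t. py f (t, y1)) has_field_derivative px (py f) (x1, y1)) (at x1)"
    by (rule sep_holo_has_derivative_x[OF sep_holo_py[OF f] z])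
  then have "((\<lambda>t. (py f (t, y1) - py f (x1, y1)) / (t - x1)) \<longlongrightarrow> px (py f) (x1, y1)) (at x1)"
    by (simp add: DERIV_def has_field_derivative_iff)
  from filterlim_compose[OF this filterlim_at_shrinking_offset[of R x1]]
  have "(\<lambda>n. (py f (x1 + of_real (R / Suc n), y1) - py f (x1, y1)) / of_real (R / Suc n))
      \<longlonglongrightarrow> px (py f) (x1, y1)"
    using R by simp
  ultimately show ?thesis
    using LIMSEQ_unique[OF lim] by simp
qed

lemma px_add: "sep_holo f N \<Longrightarrow> sep_holo g N \<Longrightarrow> z \<in> N \<Longrightarrow> px (\<lambda>z. f z + g z) z = px f z + px g z"
  by (cases z) (simp add: px_def sep_holo_differentiable_x)

lemma px_diff: "sep_holo f N \<Longrightarrow> sep_holo g N \<Longrightarrow> z \<in> N \<Longrightarrow> px (\<lambda>z. f z - g z) z = px f z - px g z"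
  by (cases z) (simp add: px_def sep_holo_differentiable_x)

lemma px_mult:
  "sep_holo f N \<Longrightarrow> sep_holo g N \<Longrightarrow> z \<in> N \<Longrightarrow> px (\<lambda>z. f z * g z) z = px f z * g z + f z * px g z"
  by (cases z) (simp add: px_def sep_holo_differentiable_x algebra_simps)

lemma px_divide: "sep_holo f N \<Longrightarrow> sep_holo g N \<Longrightarrow> z \<in> N \<Longrightarrow> g z \<noteq> 0 \<Longrightarrow>
    px (\<lambda>z. f z / g z) z = (px f z * g z - f z * px g z) / (g z) ^ 2"
  by (cases z) (simp add: px_def sep_holo_differentiable_x)

lemma px_snd_only: "px (\<lambda>z. c (snd z)) z = 0"
  by (simp add: px_def)

lemma py_add: "sep_holo f N \<Longrightarrow> sep_holo g N \<Longrightarrow> z \<in> N \<Longrightarrow> py (\<lambda>z. f z + g z) z = py f z + py g z"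
  by (cases z) (simp add: py_def sep_holo_differentiable_y)

lemma py_mult:
  "sep_holo f N \<Longrightarrow> sep_holo g N \<Longrightarrow> z \<in> N \<Longrightarrow> py (\<lambda>z. f z * g z) z = py f z * g z + f z * py g z"
  by (cases z) (simp add: py_def sep_holo_differentiable_y algebra_simps)

lemma py_divide: "sep_holo f N \<Longrightarrow> sep_holo g N \<Longrightarrow> z \<in> N \<Longrightarrow> g z \<noteq> 0 \<Longrightarrow>
    py (\<lambda>z. f z / g z) z = (py f z * g z - f z * py g z) / (g z) ^ 2"
  by (cases z) (simp add: py_def sep_holo_differentiable_y)

lemma py_snd_power: "py (\<lambda>z. snd z ^ Suc n) z = of_nat (Suc n) * snd z ^ n"
  unfolding py_def
  by (rule DERIV_imp_deriv) (auto intro!: derivative_eq_intros simp del: power_Suc)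

lemma px_cong:
  assumes "open W" "z \<in> W" "\<And>w. w \<in> W \<Longrightarrow> f w = g w"
  shows "px f z = px g z"
proof -
  obtain x y where z: "z = (x, y)"
    by (cases z)
  have "eventually (\<lambda>t. t \<in> {t. (t, y) \<in> W}) (nhds x)"
    using assms z by (intro eventually_nhds_in_open open_slice_x) auto
  then have "eventually (\<lambda>t. f (t, y) = g (t, y)) (nhds x)"
    by (rule eventually_mono) (use assms in auto)
  then show ?thesis
    unfolding z px_def by (simp add: deriv_cong_ev)
qed

lemma py_cong:
  assumes "open W" "z \<in> W" "\<And>w. w \<in> W \<Longrightarrow> f w = g w"
  shows "py f z = py g z"
proof -
  obtain x y where z: "z = (x, y)"
    by (cases z)
  have "eventually (\<lambda>t. t \<in> {t. (x, t) \<in> W}) (nhds y)"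
    using assms z by (intro eventually_nhds_in_open open_slice_y) auto
  then have "eventually (\<lambda>t. f (x, t) = g (x, t)) (nhds y)"
    by (rule eventually_mono) (use assms in auto)
  then show ?thesis
    unfolding z py_def by (simp add: deriv_cong_ev)
qed

section \<open>Behaviour along the axis \<open>y = 0\<close>\<close>

lemma sep_holo_local_bound_y:
  assumes f: "sep_holo f N" and z0: "(x0, y0) \<in> N"
  obtains R B where "R > 0" "B \<ge> 0" "cball x0 R \<times> cball y0 R \<subseteq> N"
    "\<And>x y y'. x \<in> cball x0 R \<Longrightarrow> y \<in> cball y0 R \<Longrightarrow> y' \<in> cball y0 R \<Longrightarrow>
        cmod (f (x, y') - f (x, y) - py f (x, y) * (y' - y)) \<le> B * cmod (y' - y) ^ 2"
proof -
  have "(y0, x0) \<in> prod.swap -` N"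
    using z0 by simp
  then obtain R B where "R > 0" "B \<ge> 0" and sub: "cball y0 R \<times> cball x0 R \<subseteq> prod.swap -` N"
    and taylor: "\<And>y y' x. y \<in> cball y0 R \<Longrightarrow> y' \<in> cball y0 R \<Longrightarrow> x \<in> cball x0 R \<Longrightarrow>
      cmod ((f \<circ> prod.swap) (y', x) - (f \<circ> prod.swap) (y, x) - px (f \<circ> prod.swap) (y, x) * (y' - y))
        \<le> B * cmod (y' - y) ^ 2"
    using sep_holo_local_bounds_x[OF sep_holo_swap[OF f]] by metis
  moreover have "cball x0 R \<times> cball y0 R \<subseteq> N"
    using sub by auto
  ultimately show ?thesis
    using that[of R B] by (simp add: py_eq_px_swap)
qed

definition y_quotient :: "(complex \<times> complex \<Rightarrow> complex) \<Rightarrow> complex \<times> complex \<Rightarrow> complex" where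
  "y_quotient f z = (if snd z = 0 then py f (fst z, 0) else f z / snd z)"

lemma y_quotient_eq: "(\<And>x. (x, 0) \<in> N \<Longrightarrow> f (x, 0) = 0) \<Longrightarrow> z \<in> N \<Longrightarrow> f z = snd z * y_quotient f z"
  by (cases z) (auto simp: y_quotient_def)

lemma isCont_y_quotient_on_axis:
  assumes f: "sep_holo f N" and zero: "\<And>x. (x, 0) \<in> N \<Longrightarrow> f (x, 0) = 0" and z1: "(x1, 0) \<in> N"
  shows "isCont (y_quotient f) (x1, 0)"
proof -
  obtain R B where R: "R > 0" and B: "B \<ge> 0" and sub: "cball x1 R \<times> cball 0 R \<subseteq> N"
    and taylor: "\<And>x y y'. x \<in> cball x1 R \<Longrightarrow> y \<in> cball 0 R \<Longrightarrow> y' \<in> cball 0 R \<Longrightarrow>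
      cmod (f (x, y') - f (x, y) - py f (x, y) * (y' - y)) \<le> B * cmod (y' - y) ^ 2"
    using sep_holo_local_bound_y[OF f z1] by metis
  have "isCont (py f) (x1, 0)"
    using sep_holo_continuous[OF sep_holo_py[OF f]] sep_holo_open[OF f] z1
    by (simp add: continuous_on_eq_continuous_at)
  then have "isCont (\<lambda>w. py f (fst w, 0)) (x1, 0)"
    using isCont_o2[where f="\<lambda>w. (fst w, 0)" and a="(x1, 0)" and g="py f"]
    by (simp add: continuous_intros)
  then show ?thesis
  proof (rule isCont_if_close_to_continuous[OF _ _ R])
    fix w :: "complex \<times> complex" assume w: "w \<in> ball (x1, 0) R"
    obtain x y where xy: "w = (x, y)"
      by (cases w)
    have near: "x \<in> cball x1 R" "y \<in> cball 0 R" "cmod y \<le> dist w (x1, 0)"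
      using w xy dist_fst_le[of "(x1, 0)" w] dist_snd_le[of "(x1, 0)" w] dist_snd_le[of w "(x1, 0)"]
      by (auto simp: dist_commute)
    have "cmod (y_quotient f w - py f (x, 0)) \<le> B * cmod y"
    proof (cases "y = 0")
      case False
      have "(x, 0) \<in> N"
        using sub near(1) R by auto
      then have "y_quotient f w - py f (x, 0) = (f (x, y) - f (x, 0) - py f (x, 0) * (y - 0)) / y"
        using False xy zero by (simp add: y_quotient_def field_simps)
      also have "cmod \<dots> \<le> B * cmod y ^ 2 / cmod y"
        using taylor[OF near(1) _ near(2), of 0] R by (simp add: norm_divide divide_right_mono)
      finally show ?thesis
        using False by (simp add: power2_eq_square)
    qed (simp add: xy y_quotient_def)
    also have "\<dots> \<le> B * dist w (x1, 0)"
      using near(3) B by (rule mult_left_mono)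
    finally show "cmod (y_quotient f w - py f (fst w, 0)) \<le> B * dist w (x1, 0)"
      by (simp add: xy)
  qed (simp add: y_quotient_def)
qed

lemma continuous_on_y_quotient:
  assumes f: "sep_holo f N" and zero: "\<And>x. (x, 0) \<in> N \<Longrightarrow> f (x, 0) = 0"
  shows "continuous_on N (y_quotient f)"
proof (clarsimp simp: continuous_on_eq_continuous_at[OF sep_holo_open[OF f]])
  fix x1 y1 assume z1: "(x1, y1) \<in> N"
  show "isCont (y_quotient f) (x1, y1)"
  proof (cases "y1 = 0")
    case False
    define W where "W = N \<inter> {z. snd z \<noteq> 0}"
    have W: "open W" "(x1, y1) \<in> W"
      using sep_holo_open[OF f] z1 False
      by (auto simp: W_def intro!: open_Int open_Collect_neq continuous_intros)
    have "continuous_on W (\<lambda>z. f z / snd z)"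
      by (intro continuous_intros continuous_on_subset[OF sep_holo_continuous[OF f]]) (auto simp: W_def)
    then have "continuous_on W (y_quotient f)"
      by (rule continuous_on_cong[THEN iffD1, rotated 2]) (auto simp: W_def y_quotient_def)
    then show ?thesis
      using W continuous_on_eq_continuous_at by blast
  qed (use isCont_y_quotient_on_axis[OF f zero] z1 in auto)
qed

lemma sep_holo_y_quotient:
  assumes f: "sep_holo f N" and proj: "\<And>x y. (x, y) \<in> N \<Longrightarrow> (x, 0) \<in> N"
    and zero: "\<And>x. (x, 0) \<in> N \<Longrightarrow> f (x, 0) = 0"
  shows "sep_holo (y_quotient f) N"
proof (rule sep_holoI[OF sep_holo_open[OF f] continuous_on_y_quotient[OF f zero]])
  fix x y assume xy: "(x, y) \<in> N"
  show "(\<lambda>t. y_quotient f (t, y)) field_differentiable at x"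
    using sep_holo_differentiable_x[OF sep_holo_py[OF f] xy] sep_holo_differentiable_x[OF f xy]
    by (cases "y = 0") (auto simp: y_quotient_def intro!: field_differentiable_divide field_differentiable_const)
  define S where "S = {t. (x, t) \<in> N}"
  have S: "open S" "y \<in> S"
    using open_slice_y[OF sep_holo_open[OF f]] xy by (auto simp: S_def)
  have "(\<lambda>t. if t = 0 then deriv (\<lambda>t. f (x, t)) 0 else (f (x, t) - f (x, 0)) / (t - 0)) holomorphic_on S"
    unfolding S_def by (rule pole_lemma_open[OF sep_holo_holomorphic_y[OF f] open_slice_y[OF sep_holo_open[OF f]]])
  moreover have "(\<lambda>t. if t = 0 then deriv (\<lambda>t. f (x, t)) 0 else (f (x, t) - f (x, 0)) / (t - 0)) =
      (\<lambda>t. y_quotient f (x, t))"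
    using zero[OF proj[OF xy]] by (auto simp: y_quotient_def py_def)
  ultimately show "(\<lambda>t. y_quotient f (x, t)) field_differentiable at y"
    using S holomorphic_on_imp_differentiable_at by auto
qed

lemma finite_zeros_on_x_axis:
  assumes f: "sep_holo f U" and rho: "\<rho> > 0" "ball (0 :: complex \<times> complex) \<rho> \<subseteq> U"
    and ndvd: "\<not> y_dvd_germ f"
  shows "finite {x \<in> cball 0 (\<rho> / 2). f (x, 0) = 0}"
proof (rule ccontr)
  define Z where "Z = {x \<in> cball 0 (\<rho> / 2). f (x, 0) = 0}"
  assume "infinite {x \<in> cball 0 (\<rho> / 2). f (x, 0) = 0}"
  moreover have "cball 0 (\<rho> / 2) \<inter> Z = Z"
    by (auto simp: Z_def)
  ultimately obtain \<xi> where \<xi>: "\<xi> \<in> cball 0 (\<rho> / 2)" "\<xi> islimpt Z"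
    using finite_not_islimpt_in_compact[of "cball 0 (\<rho> / 2)" Z] by (metis Z_def compact_cball)
  define N where "N = ball (0 :: complex \<times> complex) \<rho>"
  have axis: "ball 0 \<rho> = {t. (t, 0) \<in> N}"
    by (auto simp: N_def norm_Pair)
  have fN: "sep_holo f N"
    using sep_holo_subset[OF f _ rho(2)] by (simp add: N_def)
  have zero: "f (x, 0) = 0" if "(x, 0) \<in> N" for x
  proof (rule analytic_continuation[OF _ open_ball connected_ball, of "\<lambda>t. f (t, 0)" 0 \<rho> Z \<xi>])
    show "(\<lambda>t. f (t, 0)) holomorphic_on ball 0 \<rho>"
      unfolding axis by (rule sep_holo_holomorphic_x[OF fN])
  qed (use \<xi> rho that axis in \<open>auto simp: Z_def\<close>)
  have proj: "(x, 0) \<in> N" if "(x, y) \<in> N" for x y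
    using that norm_fst_le[of x y] by (simp add: N_def)
  have "holo2 (y_quotient f) N"
    using sep_holo_imp_holo2[OF sep_holo_y_quotient[OF fN proj zero]] .
  moreover have "\<forall>z\<in>N. f z = snd z * y_quotient f z"
    using y_quotient_eq[of N f, OF zero] by blast
  ultimately have "y_dvd_germ f"
    unfolding y_dvd_germ_def N_def using rho(1) by blast
  with ndvd show False ..
qed

lemma holo2_add_scaled:
  assumes "holo2 g (ball c e1)" "sep_holo H (ball c e2)"
  shows "holo2 (\<lambda>z. g z + s * H z) (ball c (min e1 e2))"
  using assms by (intro sep_holo_imp_holo2 sep_holo_add sep_holo_mult sep_holo_const)
    (auto intro: sep_holo_subset holo2_imp_sep_holo)

context
  fixes V :: "(complex \<times> complex) set" and K F :: "complex \<times> complex \<Rightarrow> complex"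
    and a :: nat and r0 :: real and S0 :: "complex set"
  assumes V: "\<And>z. z \<in> V \<Longrightarrow> snd z \<noteq> 0" and r0: "r0 > 0" and S0: "finite S0"
    and decomp: "\<And>x0. cmod x0 < r0 \<Longrightarrow> x0 \<notin> S0 \<Longrightarrow>
      \<exists>e>0. \<exists>H. sep_holo H (ball (x0, 0) e) \<and> (\<forall>z\<in>ball (x0, 0) e \<inter> V. K z = F z / snd z ^ a + H z)"
begin

lemma ypow_dvd_along_y0_if_holo_along_y0:
  assumes "holo_along_y0 V K" shows "ypow_dvd_along_y0 a V F"
proof -
  obtain r S where "r > 0" "finite S" and hol: "\<And>x0. cmod x0 < r \<Longrightarrow> x0 \<notin> S \<Longrightarrow>
      \<exists>e>0. \<exists>g. holo2 g (ball (x0, 0) e) \<and> (\<forall>z\<in>ball (x0, 0) e \<inter> V. K z = g z)"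
    using assms unfolding holo_along_y0_def by blast
  have "\<exists>e>0. \<exists>g. holo2 g (ball (x0, 0) e) \<and> (\<forall>z\<in>ball (x0, 0) e \<inter> V. F z = snd z ^ a * g z)"
    if x0: "cmod x0 < min r r0" "x0 \<notin> S \<union> S0" for x0
  proof -
    obtain e1 g where "e1 > 0" and g: "holo2 g (ball (x0, 0) e1)" and Kg: "\<forall>z\<in>ball (x0, 0) e1 \<inter> V. K z = g z"
      using hol[of x0] x0 by auto
    obtain e2 H where "e2 > 0" and H: "sep_holo H (ball (x0, 0) e2)"
      and KH: "\<forall>z\<in>ball (x0, 0) e2 \<inter> V. K z = F z / snd z ^ a + H z"
      using decomp[of x0] x0 by auto
    show ?thesis
    proof (intro exI[of _ "min e1 e2"] conjI exI[of _ "\<lambda>z. g z - H z"] ballI)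
      show "min e1 e2 > 0" "holo2 (\<lambda>z. g z - H z) (ball (x0, 0) (min e1 e2))"
        using \<open>e1 > 0\<close> \<open>e2 > 0\<close> holo2_add_scaled[OF g H, of "- 1"] by auto
      fix z assume z: "z \<in> ball (x0, 0) (min e1 e2) \<inter> V"
      then have "z \<in> ball (x0, 0) e1 \<inter> V" "z \<in> ball (x0, 0) e2 \<inter> V"
        by auto
      then have "g z = F z / snd z ^ a + H z"
        using bspec[OF Kg] bspec[OF KH] by metis
      then show "F z = snd z ^ a * (g z - H z)"
        using V[of z] z by (simp add: field_simps)
    qed
  qed
  then show ?thesis
    unfolding ypow_dvd_along_y0_def using \<open>r > 0\<close> r0 \<open>finite S\<close> S0
    by (intro exI[of _ "min r r0"] exI[of _ "S \<union> S0"]) auto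
qed

lemma holo_along_y0_if_ypow_dvd_along_y0:
  assumes "ypow_dvd_along_y0 a V F" shows "holo_along_y0 V K"
proof -
  obtain r S where "r > 0" "finite S" and dvd: "\<And>x0. cmod x0 < r \<Longrightarrow> x0 \<notin> S \<Longrightarrow>
      \<exists>e>0. \<exists>g. holo2 g (ball (x0, 0) e) \<and> (\<forall>z\<in>ball (x0, 0) e \<inter> V. F z = snd z ^ a * g z)"
    using assms unfolding ypow_dvd_along_y0_def by blast
  have "\<exists>e>0. \<exists>g. holo2 g (ball (x0, 0) e) \<and> (\<forall>z\<in>ball (x0, 0) e \<inter> V. K z = g z)"
    if x0: "cmod x0 < min r r0" "x0 \<notin> S \<union> S0" for x0
  proof -
    obtain e1 g where "e1 > 0" and g: "holo2 g (ball (x0, 0) e1)"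
      and Fg: "\<forall>z\<in>ball (x0, 0) e1 \<inter> V. F z = snd z ^ a * g z"
      using dvd[of x0] x0 by auto
    obtain e2 H where "e2 > 0" and H: "sep_holo H (ball (x0, 0) e2)"
      and KH: "\<forall>z\<in>ball (x0, 0) e2 \<inter> V. K z = F z / snd z ^ a + H z"
      using decomp[of x0] x0 by auto
    show ?thesis
    proof (intro exI[of _ "min e1 e2"] conjI exI[of _ "\<lambda>z. g z + H z"] ballI)
      show "min e1 e2 > 0" "holo2 (\<lambda>z. g z + H z) (ball (x0, 0) (min e1 e2))"
        using \<open>e1 > 0\<close> \<open>e2 > 0\<close> holo2_add_scaled[OF g H, of 1] by auto
      fix z assume z: "z \<in> ball (x0, 0) (min e1 e2) \<inter> V"
      then have "z \<in> ball (x0, 0) e1 \<inter> V" "z \<in> ball (x0, 0) e2 \<inter> V"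
        by auto
      then have "K z = F z / snd z ^ a + H z" "F z = snd z ^ a * g z"
        using bspec[OF Fg] bspec[OF KH] by blast+
      then show "K z = g z + H z"
        using V[of z] z by simp
    qed
  qed
  then show ?thesis
    unfolding holo_along_y0_def using \<open>r > 0\<close> r0 \<open>finite S\<close> S0
    by (intro exI[of _ "min r r0"] exI[of _ "S \<union> S0"]) auto
qed

lemma holo_along_y0_iff_ypow_dvd: "holo_along_y0 V K \<longleftrightarrow> ypow_dvd_along_y0 a V F"
  using ypow_dvd_along_y0_if_holo_along_y0 holo_along_y0_if_ypow_dvd_along_y0 by blast

end

section \<open>Exterior calculus of 1-forms\<close>

lemma ext_d_cong:
  assumes "open N" "z \<in> N" "\<And>w. w \<in> N \<Longrightarrow> fst u w = fst v w" "\<And>w. w \<in> N \<Longrightarrow> snd u w = snd v w"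
  shows "ext_d u z = ext_d v z"
  unfolding ext_d_def using px_cong[OF assms(1,2,4)] py_cong[OF assms(1,2,3)] by simp

lemma ext_d_scale_form:
  assumes "sep_holo l N" "sep_holo (fst w) N" "sep_holo (snd w) N" "z \<in> N"
  shows "ext_d (scale_form l w) z = wedge (px l, py l) w z + l z * ext_d w z"
  using px_mult[OF assms(1,3,4)] py_mult[OF assms(1,2,4)]
  by (simp add: ext_d_def wedge_def scale_form_def algebra_simps)

lemma ext_d_add_log_derivative:
  assumes l: "sep_holo l N" "\<And>z. z \<in> N \<Longrightarrow> l z \<noteq> 0"
    and P: "sep_holo P N" and Q: "sep_holo Q N" and z: "z \<in> N"
  shows "ext_d ((\<lambda>z. P z + px l z / l z), (\<lambda>z. Q z + py l z / l z)) z = ext_d (P, Q) z"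
proof -
  have "px (\<lambda>z. Q z + py l z / l z) z = px Q z + (px (py l) z * l z - py l z * px l z) / (l z) ^ 2"
    using px_add[OF Q sep_holo_divide[OF sep_holo_py[OF l(1)] l] z]
      px_divide[OF sep_holo_py[OF l(1)] l(1) z l(2)[OF z]] by simp
  moreover have "py (\<lambda>z. P z + px l z / l z) z = py P z + (py (px l) z * l z - px l z * py l z) / (l z) ^ 2"
    using py_add[OF P sep_holo_divide[OF sep_holo_px[OF l(1)] l] z]
      py_divide[OF sep_holo_px[OF l(1)] l(1) z l(2)[OF z]] by simp
  moreover have "py (px l) z = px (py l) z"
    using py_px_commute[OF l(1), of "fst z" "snd z"] z by simp
  ultimately show ?thesis
    by (simp add: ext_d_def algebra_simps)
qed

lemma wedge_two_independent_zero:
  fixes tx ty l1 l2 F1 F2 :: complex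
  assumes "l1 \<noteq> 0" "l2 \<noteq> 0" "F1 \<noteq> F2"
    and "tx * l1 - ty * (l1 * F1) = 0" "tx * l2 - ty * (l2 * F2) = 0"
  shows "tx = 0" "ty = 0"
proof -
  have "tx = ty * F1" "tx = ty * F2"
    using assms by (simp_all add: algebra_simps)
  then have "ty * (F1 - F2) = 0"
    by (metis right_diff_distrib right_minus_eq)
  then show "ty = 0"
    using assms(3) by simp
  then show "tx = 0"
    using \<open>tx = ty * F1\<close> by simp
qed

lemma sep_holo_ext_d: "sep_holo (fst w) N \<Longrightarrow> sep_holo (snd w) N \<Longrightarrow> sep_holo (ext_d w) N"
  unfolding ext_d_def by (intro sep_holo_diff sep_holo_px sep_holo_py)

lemma web_curvatureE:
  assumes "web_curvature V w1 w2 w3 K" "p \<in> V"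
  obtains N l1 l2 l3 eta where "open N" "p \<in> N" "N \<subseteq> V"
    "holo2 l1 N" "holo2 l2 N" "holo2 l3 N" "holo2 (fst eta) N" "holo2 (snd eta) N"
    "\<And>z. z \<in> N \<Longrightarrow> l1 z \<noteq> 0 \<and> l2 z \<noteq> 0 \<and> l3 z \<noteq> 0"
    "\<And>z. z \<in> N \<Longrightarrow> fst (scale_form l1 w1) z + fst (scale_form l2 w2) z + fst (scale_form l3 w3) z = 0"
    "\<And>z. z \<in> N \<Longrightarrow> snd (scale_form l1 w1) z + snd (scale_form l2 w2) z + snd (scale_form l3 w3) z = 0"
    "\<And>z. z \<in> N \<Longrightarrow> ext_d (scale_form l1 w1) z = wedge eta (scale_form l1 w1) z"
    "\<And>z. z \<in> N \<Longrightarrow> ext_d (scale_form l2 w2) z = wedge eta (scale_form l2 w2) z"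
    "\<And>z. z \<in> N \<Longrightarrow> K z = ext_d eta z"
proof -
  obtain N l1 l2 l3 eta where "open N \<and> p \<in> N \<and> N \<subseteq> V \<and>
      holo2 l1 N \<and> holo2 l2 N \<and> holo2 l3 N \<and> holo2 (fst eta) N \<and> holo2 (snd eta) N \<and>
      (\<forall>z\<in>N. l1 z \<noteq> 0 \<and> l2 z \<noteq> 0 \<and> l3 z \<noteq> 0) \<and>
      (\<forall>z\<in>N. fst (scale_form l1 w1) z + fst (scale_form l2 w2) z + fst (scale_form l3 w3) z = 0
            \<and> snd (scale_form l1 w1) z + snd (scale_form l2 w2) z + snd (scale_form l3 w3) z = 0) \<and>
      (\<forall>z\<in>N. ext_d (scale_form l1 w1) z = wedge eta (scale_form l1 w1) z
            \<and> ext_d (scale_form l2 w2) z = wedge eta (scale_form l2 w2) z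
            \<and> ext_d (scale_form l3 w3) z = wedge eta (scale_form l3 w3) z) \<and>
      (\<forall>z\<in>N. K z = ext_d eta z)"
    using bspec[OF assms(1)[unfolded web_curvature_def] assms(2)] by (elim exE) (rule that)
  then show ?thesis
    by (intro that[of N l1 l2 l3 eta]) auto
qed

section \<open>Pointwise algebra of the connection form\<close>

lemma web_connection_solves:
  fixes l1 l2 l3 F1 F2 F3 p1 p2 p3 q1 q2 q3 :: complex
  assumes l: "l1 \<noteq> 0" "l2 \<noteq> 0" and F: "F2 - F1 \<noteq> 0"
    and sum_l: "l1 + l2 + l3 = 0" and sum_lF: "l1 * F1 + l2 * F2 + l3 * F3 = 0"
    and sum_p: "p1 + p2 + p3 = 0" and sum_q: "q1 + q2 + q3 = 0"
  defines "Q \<equiv> ((p1 - q1) / l1 - (p2 - q2) / l2) / (F2 - F1)"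
  defines "P \<equiv> (p1 - q1) / l1 + Q * F1"
  shows "p1 - q1 = P * l1 - Q * (l1 * F1)" "p2 - q2 = P * l2 - Q * (l2 * F2)"
    "p3 - q3 = P * l3 - Q * (l3 * F3)"
proof -
  have "Q * (F2 - F1) = (p1 - q1) / l1 - (p2 - q2) / l2"
    using F by (simp add: Q_def)
  then have e2: "P - Q * F2 = (p2 - q2) / l2"
    by (simp add: P_def algebra_simps)
  show 1: "p1 - q1 = P * l1 - Q * (l1 * F1)"
    using l by (simp add: P_def field_simps)
  show 2: "p2 - q2 = P * l2 - Q * (l2 * F2)"
    using e2 l by (simp add: field_simps)
  have third: "c = - a - b" if "a + b + c = 0" for a b c :: complex
    using minus_unique[OF that] by simp
  have "P * l3 - Q * (l3 * F3) = - (P * l1 - Q * (l1 * F1)) - (P * l2 - Q * (l2 * F2))"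
    unfolding third[OF sum_lF] unfolding third[OF sum_l] by (simp add: algebra_simps)
  also have "\<dots> = p3 - q3"
    unfolding 1[symmetric] 2[symmetric] third[OF sum_p] third[OF sum_q] by simp
  finally show "p3 - q3 = P * l3 - Q * (l3 * F3)"
    by simp
qed

text \<open>With \<open>q\<^sub>i = (l\<^sub>i F\<^sub>i)\<^sub>y\<close> for \<open>F\<^sub>i = Y\<^sup>a h\<^sub>i\<close>, only the term \<open>A / Y\<^sup>a\<close> of \<open>Q\<close>
  is singular at \<open>Y = 0\<close>.\<close>

lemma web_connection_expansion:
  fixes Y h1 h2 l1 l2 p1 p2 yl1 yl2 yh1 yh2 :: complex and b :: nat
  assumes nz: "Y \<noteq> 0" "l1 \<noteq> 0" "l2 \<noteq> 0" "h1 \<noteq> h2"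
  defines "q1 \<equiv> yl1 * (Y ^ Suc b * h1) + l1 * (of_nat (Suc b) * Y ^ b * h1 + Y ^ Suc b * yh1)"
    and "q2 \<equiv> yl2 * (Y ^ Suc b * h2) + l2 * (of_nat (Suc b) * Y ^ b * h2 + Y ^ Suc b * yh2)"
  defines "Q \<equiv> ((p1 - q1) / l1 - (p2 - q2) / l2) / (Y ^ Suc b * h2 - Y ^ Suc b * h1)"
  defines "P \<equiv> (p1 - q1) / l1 + Q * (Y ^ Suc b * h1)"
  defines "A \<equiv> (p1 / l1 - p2 / l2) / (h1 - h2)"
    and "B \<equiv> (h1 * yl1 / l1 - h2 * yl2 / l2 + (yh1 - yh2)) / (h1 - h2)"
  shows "Q = B + of_nat (Suc b) / Y - A / Y ^ Suc b"
    and "P = p1 / l1 - Y ^ Suc b * h1 * yl1 / l1 - Y ^ Suc b * yh1 - h1 * A + Y ^ Suc b * h1 * B"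
proof -
  define T where "T = A - Y ^ Suc b * B - of_nat (Suc b) * Y ^ b"
  have Yp: "Y ^ Suc b \<noteq> 0"
    using nz(1) by simp
  have a1: "(p1 - q1) / l1 = p1 / l1 - Y ^ Suc b * h1 * yl1 / l1 - of_nat (Suc b) * Y ^ b * h1 - Y ^ Suc b * yh1"
    using nz(2) by (simp add: q1_def field_simps)
  have a2: "(p2 - q2) / l2 = p2 / l2 - Y ^ Suc b * h2 * yl2 / l2 - of_nat (Suc b) * Y ^ b * h2 - Y ^ Suc b * yh2"
    using nz(3) by (simp add: q2_def field_simps)
  have "(p1 - q1) / l1 - (p2 - q2) / l2 = (p1 / l1 - p2 / l2)
      - Y ^ Suc b * (h1 * yl1 / l1 - h2 * yl2 / l2 + (yh1 - yh2)) - of_nat (Suc b) * Y ^ b * (h1 - h2)"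
    unfolding a1 a2 by (simp add: algebra_simps)
  also have "\<dots> = A * (h1 - h2) - Y ^ Suc b * (B * (h1 - h2)) - of_nat (Suc b) * Y ^ b * (h1 - h2)"
    using nz(4) by (simp add: A_def B_def)
  finally have diff: "(p1 - q1) / l1 - (p2 - q2) / l2 = (h1 - h2) * T"
    by (simp add: T_def algebra_simps)
  have "Y ^ Suc b * h2 - Y ^ Suc b * h1 = - (Y ^ Suc b * (h1 - h2))"
    by (simp add: algebra_simps)
  then have QT: "Q = - T / Y ^ Suc b"
    using nz(4) Yp unfolding Q_def diff by (simp add: field_simps)
  have "of_nat (Suc b) * Y ^ b / Y ^ Suc b = of_nat (Suc b) / Y"
    using nz(1) by simp
  then show "Q = B + of_nat (Suc b) / Y - A / Y ^ Suc b"
    unfolding QT T_def using Yp by (simp add: diff_divide_distrib add_divide_distrib)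
  show "P = p1 / l1 - Y ^ Suc b * h1 * yl1 / l1 - Y ^ Suc b * yh1 - h1 * A + Y ^ Suc b * h1 * B"
  proof -
    have "Q * (Y ^ Suc b * h1) = - T * h1"
      unfolding QT using Yp by simp
    then show ?thesis
      unfolding P_def a1 by (simp add: T_def algebra_simps)
  qed
qed

lemma divided_log_derivatives:
  fixes h12 h23 h31 p12 p23 p31 :: complex
  assumes "h12 \<noteq> 0" "h23 \<noteq> 0" "h31 \<noteq> 0" "h12 + h23 + h31 = 0" "p12 + p23 + p31 = 0"
  shows "(p23 / h23 - p31 / h31) / h12 = - ((h12 * p23 - h23 * p12) / (h12 * h23 * h31))"
proof -
  have "p12 = (p12 + p23 + p31) - p23 - p31" "h12 = (h12 + h23 + h31) - h23 - h31"
    by (simp_all add: algebra_simps)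
  then have p12: "p12 = - p23 - p31" and h12: "h12 = - h23 - h31"
    using assms(4,5) by simp_all
  have "- (h12 * p23 - h23 * p12) = h31 * p23 - h23 * p31"
    unfolding p12 h12 by (simp add: algebra_simps)
  then have "- ((h12 * p23 - h23 * p12) / (h12 * h23 * h31)) = (h31 * p23 - h23 * p31) / (h12 * h23 * h31)"
    by (metis minus_divide_left)
  also have "\<dots> = (p23 / h23 - p31 / h31) / h12"
    using assms(1-3) by (simp add: field_simps)
  finally show ?thesis
    by simp
qed

lemma normalizing_factors_proportional:
  fixes s h1 h2 h3 m1 m2 m3 :: complex
  assumes s: "s \<noteq> 0" and h: "h2 \<noteq> h3"
    and e1: "m1 * (s * h1) + m2 * (s * h2) + m3 * (s * h3) = 0" and e2: "m1 + m2 + m3 = 0"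
  shows "m1 = m1 / (h2 - h3) * (h2 - h3)" "m2 = m1 / (h2 - h3) * (h3 - h1)" "m3 = m1 / (h2 - h3) * (h1 - h2)"
proof -
  show "m1 = m1 / (h2 - h3) * (h2 - h3)"
    using h by simp
  have "m3 = (m1 + m2 + m3) - m1 - m2"
    by (simp add: algebra_simps)
  then have m3: "m3 = - m1 - m2"
    using e2 by simp
  have "s * (m1 * (h1 - h3) + m2 * (h2 - h3)) = 0"
    using e1 unfolding m3 by (simp add: algebra_simps)
  then have "m1 * (h1 - h3) + m2 * (h2 - h3) = 0"
    using s by simp
  then have "m2 * (h2 - h3) = m1 * (h3 - h1)"
    by (simp add: algebra_simps add_eq_0_iff)
  then show m2: "m2 = m1 / (h2 - h3) * (h3 - h1)"
    using h by (simp add: field_simps)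
  show "m3 = m1 / (h2 - h3) * (h1 - h2)"
    unfolding m3 m2 using h by (simp add: field_simps)
qed

section \<open>The web \<open>\<omega>\<^sub>i = dy + y\<^sup>a h\<^sub>i dx\<close>\<close>

locale three_web =
  fixes h1 h2 h3 :: "complex \<times> complex \<Rightarrow> complex" and U :: "(complex \<times> complex) set" and b :: nat
  assumes sep_holo_h1: "sep_holo h1 U" and sep_holo_h2: "sep_holo h2 U" and sep_holo_h3: "sep_holo h3 U"
begin

definition "h12 = (\<lambda>z. h1 z - h2 z)"
definition "h23 = (\<lambda>z. h2 z - h3 z)"
definition "h31 = (\<lambda>z. h3 z - h1 z)"

definition "V = {z \<in> U. snd z \<noteq> 0 \<and> h1 z \<noteq> h2 z \<and> h2 z \<noteq> h3 z \<and> h3 z \<noteq> h1 z}"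

text \<open>The exponent \<open>a\<close> of the theorem is \<open>Suc b\<close>.\<close>

definition w1 :: form1 where "w1 = ((\<lambda>z. snd z ^ Suc b * h1 z), (\<lambda>z. 1))"
definition w2 :: form1 where "w2 = ((\<lambda>z. snd z ^ Suc b * h2 z), (\<lambda>z. 1))"
definition w3 :: form1 where "w3 = ((\<lambda>z. snd z ^ Suc b * h3 z), (\<lambda>z. 1))"

text \<open>The normalized forms, which sum to zero, and the solution \<open>(eta_dx, eta_dy)\<close> of their
  structure equations given by \<open>web_connection_solves\<close>.\<close>

definition wt1 :: form1 where "wt1 = scale_form h23 w1"
definition wt2 :: form1 where "wt2 = scale_form h31 w2"
definition wt3 :: form1 where "wt3 = scale_form h12 w3"

definition "eta_dy = (\<lambda>z. (ext_d wt1 z / h23 z - ext_d wt2 z / h31 z) /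
  (snd z ^ Suc b * h2 z - snd z ^ Suc b * h1 z))"

definition "eta_dx = (\<lambda>z. ext_d wt1 z / h23 z + eta_dy z * (snd z ^ Suc b * h1 z))"

definition "curvature = ext_d (eta_dx, eta_dy)"

definition "G = (\<lambda>z. (h12 z * px h23 z - h23 z * px h12 z) / (h12 z * h23 z * h31 z))"

definition "eta_dy_reg = (\<lambda>z. (h1 z * py h23 z / h23 z - h2 z * py h31 z / h31 z + (py h1 z - py h2 z)) / h12 z)"

definition "eta_dx_reg = (\<lambda>z. px h23 z / h23 z - snd z ^ Suc b * h1 z * py h23 z / h23 z
  - snd z ^ Suc b * py h1 z + h1 z * G z + snd z ^ Suc b * h1 z * eta_dy_reg z)"

lemma sep_holo_differences: "sep_holo h12 U" "sep_holo h23 U" "sep_holo h31 U"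
  unfolding h12_def h23_def h31_def by (intro sep_holo_diff sep_holo_h1 sep_holo_h2 sep_holo_h3)+

lemma sep_holo_snd_power_mult: "sep_holo h N \<Longrightarrow> sep_holo (\<lambda>z. snd z ^ Suc b * h z) N"
  by (intro sep_holo_mult sep_holo_power sep_holo_snd sep_holo_open)

lemma sep_holo_wt: "sep_holo (fst wt1) U" "sep_holo (snd wt1) U" "sep_holo (fst wt2) U"
  "sep_holo (snd wt2) U" "sep_holo (fst wt3) U" "sep_holo (snd wt3) U"
  using sep_holo_differences sep_holo_snd_power_mult[OF sep_holo_h1]
    sep_holo_snd_power_mult[OF sep_holo_h2] sep_holo_snd_power_mult[OF sep_holo_h3]
  by (auto simp: wt1_def wt2_def wt3_def w1_def w2_def w3_def scale_form_def intro: sep_holo_mult)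

lemma V_subset: "V \<subseteq> U"
  by (auto simp: V_def)

lemma V_nonzero: "z \<in> V \<Longrightarrow> snd z \<noteq> 0 \<and> h12 z \<noteq> 0 \<and> h23 z \<noteq> 0 \<and> h31 z \<noteq> 0"
  by (auto simp: V_def h12_def h23_def h31_def)

lemma open_V: "open V"
proof -
  have "V = (U \<inter> snd -` (- {0})) \<inter> (U \<inter> h12 -` (- {0})) \<inter> (U \<inter> h23 -` (- {0})) \<inter> (U \<inter> h31 -` (- {0}))"
    by (auto simp: V_def h12_def h23_def h31_def)
  then show ?thesis
    using sep_holo_differences sep_holo_snd[OF sep_holo_open[OF sep_holo_h1]]
    by (auto intro!: open_Int open_nonvanishing)
qed

lemma ext_d_wt:
  "ext_d wt1 z = px h23 z - py (fst wt1) z" "ext_d wt2 z = px h31 z - py (fst wt2) z"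
  "ext_d wt3 z = px h12 z - py (fst wt3) z"
  by (simp_all add: ext_d_def wt1_def wt2_def wt3_def w1_def w2_def w3_def scale_form_def)

lemma sum_px_differences: "z \<in> U \<Longrightarrow> px h23 z + px h31 z + px h12 z = 0"
  unfolding h12_def h23_def h31_def
  using px_diff[OF sep_holo_h2 sep_holo_h3] px_diff[OF sep_holo_h3 sep_holo_h1] px_diff[OF sep_holo_h1 sep_holo_h2]
  by simp

lemma sum_py_wt: "z \<in> U \<Longrightarrow> py (fst wt1) z + py (fst wt2) z + py (fst wt3) z = 0"
proof -
  assume z: "z \<in> U"
  have "(\<lambda>z. fst wt1 z + fst wt2 z + fst wt3 z) = (\<lambda>z. 0)"
    by (simp add: wt1_def wt2_def wt3_def w1_def w2_def w3_def scale_form_def h12_def h23_def h31_def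
        algebra_simps)
  then have "py (\<lambda>z. fst wt1 z + fst wt2 z + fst wt3 z) z = 0"
    by (simp add: py_def)
  then show ?thesis
    using py_add[OF sep_holo_add[OF sep_holo_wt(1,3)] sep_holo_wt(5) z] py_add[OF sep_holo_wt(1,3) z] by simp
qed

lemma structure_equations:
  assumes z: "z \<in> V"
  shows "ext_d wt1 z = wedge (eta_dx, eta_dy) wt1 z" "ext_d wt2 z = wedge (eta_dx, eta_dy) wt2 z"
    "ext_d wt3 z = wedge (eta_dx, eta_dy) wt3 z"
proof -
  have zU: "z \<in> U"
    using z V_subset by auto
  have nz: "h23 z \<noteq> 0" "h31 z \<noteq> 0" "snd z ^ Suc b * h2 z - snd z ^ Suc b * h1 z \<noteq> 0"
    using z by (auto simp: V_def h23_def h31_def)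
  have "h23 z + h31 z + h12 z = 0"
    "h23 z * (snd z ^ Suc b * h1 z) + h31 z * (snd z ^ Suc b * h2 z) + h12 z * (snd z ^ Suc b * h3 z) = 0"
    by (simp_all add: h12_def h23_def h31_def algebra_simps)
  from web_connection_solves[OF nz this sum_px_differences[OF zU] sum_py_wt[OF zU]]
  show "ext_d wt1 z = wedge (eta_dx, eta_dy) wt1 z" "ext_d wt2 z = wedge (eta_dx, eta_dy) wt2 z"
    "ext_d wt3 z = wedge (eta_dx, eta_dy) wt3 z"
    by (simp_all add: ext_d_wt wedge_def eta_dx_def eta_dy_def)
       (simp_all add: wt1_def wt2_def wt3_def w1_def w2_def w3_def scale_form_def)
qed

lemma sep_holo_eta: "sep_holo eta_dx V" "sep_holo eta_dy V"
proof -
  have ext: "sep_holo (ext_d wt1) V" "sep_holo (ext_d wt2) V"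
    using sep_holo_subset[OF sep_holo_ext_d open_V V_subset] sep_holo_wt by blast+
  have diff: "sep_holo h23 V" "sep_holo h31 V"
    using sep_holo_subset[OF _ open_V V_subset] sep_holo_differences by blast+
  have F: "sep_holo (\<lambda>z. snd z ^ Suc b * h z) V" if "sep_holo h U" for h
    using sep_holo_snd_power_mult sep_holo_subset[OF that open_V V_subset] by blast
  have nz: "z \<in> V \<Longrightarrow> h23 z \<noteq> 0 \<and> h31 z \<noteq> 0 \<and> snd z ^ Suc b * h2 z - snd z ^ Suc b * h1 z \<noteq> 0" for z
    by (auto simp: V_def h23_def h31_def)
  show "sep_holo eta_dy V"
    unfolding eta_dy_def using nz
    by (intro sep_holo_divide sep_holo_diff ext diff F sep_holo_h1 sep_holo_h2) auto
  then show "sep_holo eta_dx V"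
    unfolding eta_dx_def using nz
    by (intro sep_holo_add sep_holo_divide sep_holo_mult ext diff F sep_holo_h1) auto
qed

lemma curvature_is_web_curvature: "web_curvature V w1 w2 w3 curvature"
  unfolding web_curvature_def
proof (intro ballI exI conjI)
  show "open V" "V \<subseteq> V"
    by (simp_all add: open_V)
  show "holo2 h23 V" "holo2 h31 V" "holo2 h12 V"
    using sep_holo_imp_holo2[OF sep_holo_subset[OF _ open_V V_subset]] sep_holo_differences by blast+
  show "holo2 (fst (eta_dx, eta_dy)) V" "holo2 (snd (eta_dx, eta_dy)) V"
    using sep_holo_imp_holo2[OF sep_holo_eta(1)] sep_holo_imp_holo2[OF sep_holo_eta(2)] by simp_all
  fix z assume z: "z \<in> V"
  show "h23 z \<noteq> 0" "h31 z \<noteq> 0" "h12 z \<noteq> 0"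
    using V_nonzero[OF z] by simp_all
  show "fst (scale_form h23 w1) z + fst (scale_form h31 w2) z + fst (scale_form h12 w3) z = 0"
    "snd (scale_form h23 w1) z + snd (scale_form h31 w2) z + snd (scale_form h12 w3) z = 0"
    by (simp_all add: scale_form_def w1_def w2_def w3_def h12_def h23_def h31_def algebra_simps)
  show "ext_d (scale_form h23 w1) z = wedge (eta_dx, eta_dy) (scale_form h23 w1) z"
    "ext_d (scale_form h31 w2) z = wedge (eta_dx, eta_dy) (scale_form h31 w2) z"
    "ext_d (scale_form h12 w3) z = wedge (eta_dx, eta_dy) (scale_form h12 w3) z"
    using structure_equations[OF z] by (simp_all add: wt1_def wt2_def wt3_def)
  show "curvature z = ext_d (eta_dx, eta_dy) z"
    by (simp add: curvature_def)
qed

lemma connection_shift: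
  assumes N: "N \<subseteq> V" "open N" and l: "sep_holo l N" "\<And>z. z \<in> N \<Longrightarrow> l z \<noteq> 0"
    and eq1: "\<And>z. z \<in> N \<Longrightarrow> ext_d (scale_form l wt1) z = wedge eta (scale_form l wt1) z"
    and eq2: "\<And>z. z \<in> N \<Longrightarrow> ext_d (scale_form l wt2) z = wedge eta (scale_form l wt2) z"
    and z: "z \<in> N"
  shows "fst eta z = eta_dx z + px l z / l z" "snd eta z = eta_dy z + py l z / l z"
proof -
  have wt: "sep_holo (fst wt1) N" "sep_holo (snd wt1) N" "sep_holo (fst wt2) N" "sep_holo (snd wt2) N"
    using sep_holo_wt sep_holo_subset[OF _ N(2)] N(1) V_subset by blast+
  have zV: "z \<in> V"
    using z N(1) by auto
  define tx where "tx = l z * fst eta z - px l z - l z * eta_dx z"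
  define ty where "ty = l z * snd eta z - py l z - l z * eta_dy z"
  have "wedge eta (scale_form l wt1) z = wedge (px l, py l) wt1 z + l z * wedge (eta_dx, eta_dy) wt1 z"
    using eq1[OF z] ext_d_scale_form[OF l(1) wt(1,2) z] structure_equations(1)[OF zV] by simp
  then have t1: "tx * h23 z - ty * (h23 z * (snd z ^ Suc b * h1 z)) = 0"
    by (simp add: tx_def ty_def wedge_def scale_form_def wt1_def w1_def algebra_simps)
  have "wedge eta (scale_form l wt2) z = wedge (px l, py l) wt2 z + l z * wedge (eta_dx, eta_dy) wt2 z"
    using eq2[OF z] ext_d_scale_form[OF l(1) wt(3,4) z] structure_equations(2)[OF zV] by simp
  then have t2: "tx * h31 z - ty * (h31 z * (snd z ^ Suc b * h2 z)) = 0"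
    by (simp add: tx_def ty_def wedge_def scale_form_def wt2_def w2_def algebra_simps)
  have "h23 z \<noteq> 0" "h31 z \<noteq> 0" "snd z ^ Suc b * h1 z \<noteq> snd z ^ Suc b * h2 z"
    using zV by (auto simp: V_def h23_def h31_def)
  then have "tx = 0" "ty = 0"
    using wedge_two_independent_zero[OF _ _ _ t1 t2] by blast+
  then show "fst eta z = eta_dx z + px l z / l z" "snd eta z = eta_dy z + py l z / l z"
    using l(2)[OF z] by (simp_all add: tx_def ty_def field_simps)
qed

lemma curvature_unique:
  assumes K: "web_curvature V w1 w2 w3 K" and p: "p \<in> V"
  shows "K p = curvature p"
proof -
  obtain N l1 l2 l3 eta where N: "open N" "p \<in> N" "N \<subseteq> V" and hl1: "holo2 l1 N"
    and "holo2 l2 N" "holo2 l3 N" "holo2 (fst eta) N" "holo2 (snd eta) N"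
    and nz: "\<And>z. z \<in> N \<Longrightarrow> l1 z \<noteq> 0 \<and> l2 z \<noteq> 0 \<and> l3 z \<noteq> 0"
    and sum_dx: "\<And>z. z \<in> N \<Longrightarrow> fst (scale_form l1 w1) z + fst (scale_form l2 w2) z + fst (scale_form l3 w3) z = 0"
    and sum_dy: "\<And>z. z \<in> N \<Longrightarrow> snd (scale_form l1 w1) z + snd (scale_form l2 w2) z + snd (scale_form l3 w3) z = 0"
    and eq1: "\<And>z. z \<in> N \<Longrightarrow> ext_d (scale_form l1 w1) z = wedge eta (scale_form l1 w1) z"
    and eq2: "\<And>z. z \<in> N \<Longrightarrow> ext_d (scale_form l2 w2) z = wedge eta (scale_form l2 w2) z"
    and K_eq: "\<And>z. z \<in> N \<Longrightarrow> K z = ext_d eta z"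
    using web_curvatureE[OF K p] by blast
  have sep_eta: "sep_holo (fst eta) N" "sep_holo (snd eta) N"
    using holo2_imp_sep_holo \<open>holo2 (fst eta) N\<close> \<open>holo2 (snd eta) N\<close> by blast+
  have NV: "z \<in> N \<Longrightarrow> z \<in> V" for z
    using N(3) by auto
  define l where "l z = l1 z / h23 z" for z
  have sep_l: "sep_holo l N"
    unfolding l_def using holo2_imp_sep_holo[OF hl1] sep_holo_subset[OF sep_holo_differences(2) N(1)]
      N(3) V_subset V_nonzero by (intro sep_holo_divide) auto
  have l_nz: "l z \<noteq> 0" if "z \<in> N" for z
    using nz[OF that] V_nonzero[OF NV[OF that]] by (simp add: l_def)
  have proportional: "l1 z = l z * h23 z \<and> l2 z = l z * h31 z" if z: "z \<in> N" for z
  proof -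
    have "snd z ^ Suc b \<noteq> 0" "h2 z \<noteq> h3 z"
      using V_nonzero[OF NV[OF z]] by (auto simp: h23_def)
    from normalizing_factors_proportional[OF this, of "l1 z" "h1 z" "l2 z" "l3 z"] sum_dx[OF z] sum_dy[OF z]
    show ?thesis
      using V_nonzero[OF NV[OF z]] by (simp add: l_def h23_def h31_def scale_form_def w1_def w2_def w3_def)
  qed
  have rescaled: "ext_d (scale_form l wt1) z = wedge eta (scale_form l wt1) z"
    "ext_d (scale_form l wt2) z = wedge eta (scale_form l wt2) z" if z: "z \<in> N" for z
  proof -
    have "ext_d (scale_form l1 w1) z = ext_d (scale_form l wt1) z"
      "ext_d (scale_form l2 w2) z = ext_d (scale_form l wt2) z"
      by (rule ext_d_cong[OF N(1) z]; simp add: proportional scale_form_def wt1_def wt2_def)+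
    then show "ext_d (scale_form l wt1) z = wedge eta (scale_form l wt1) z"
      "ext_d (scale_form l wt2) z = wedge eta (scale_form l wt2) z"
      using eq1[OF z] eq2[OF z] proportional[OF z] by (simp_all add: wedge_def scale_form_def wt1_def wt2_def)
  qed
  note shift = connection_shift[OF N(3,1) sep_l l_nz rescaled]
  have "K p = ext_d ((\<lambda>z. eta_dx z + px l z / l z), (\<lambda>z. eta_dy z + py l z / l z)) p"
    using K_eq[OF N(2)] by (simp add: ext_d_cong[OF N(1,2)] shift)
  also have "\<dots> = ext_d (eta_dx, eta_dy) p"
    using ext_d_add_log_derivative[OF sep_l l_nz sep_holo_subset[OF sep_holo_eta(1) N(1,3)]
        sep_holo_subset[OF sep_holo_eta(2) N(1,3)] N(2)] by simp
  finally show ?thesis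
    by (simp add: curvature_def)
qed

lemma py_snd_power_mult:
  "sep_holo h N \<Longrightarrow> z \<in> N \<Longrightarrow>
    py (\<lambda>z. snd z ^ Suc b * h z) z = of_nat (Suc b) * snd z ^ b * h z + snd z ^ Suc b * py h z"
  using py_mult[OF sep_holo_power[OF sep_holo_snd] _ , of N h z "Suc b"] py_snd_power[of b z]
  by (simp add: sep_holo_open)

lemma eta_expansion:
  assumes z: "z \<in> V"
  shows "eta_dy z = eta_dy_reg z + of_nat (Suc b) / snd z + G z / snd z ^ Suc b"
    and "eta_dx z = eta_dx_reg z"
proof -
  have zU: "z \<in> U"
    using z V_subset by auto
  have nz: "snd z \<noteq> 0" "h23 z \<noteq> 0" "h31 z \<noteq> 0" "h1 z \<noteq> h2 z" "h12 z \<noteq> 0"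
    using V_nonzero[OF z] by (auto simp: h12_def)
  have py_wt: "py (fst wt1) z = py h23 z * (snd z ^ Suc b * h1 z)
      + h23 z * (of_nat (Suc b) * snd z ^ b * h1 z + snd z ^ Suc b * py h1 z)"
    "py (fst wt2) z = py h31 z * (snd z ^ Suc b * h2 z)
      + h31 z * (of_nat (Suc b) * snd z ^ b * h2 z + snd z ^ Suc b * py h2 z)"
    using py_mult[OF sep_holo_differences(2) sep_holo_snd_power_mult[OF sep_holo_h1] zU]
      py_mult[OF sep_holo_differences(3) sep_holo_snd_power_mult[OF sep_holo_h2] zU]
      py_snd_power_mult[OF sep_holo_h1 zU] py_snd_power_mult[OF sep_holo_h2 zU]
    by (simp_all add: wt1_def wt2_def w1_def w2_def scale_form_def)
  have "h12 z + h23 z + h31 z = 0" "px h12 z + px h23 z + px h31 z = 0"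
    using sum_px_differences[OF zU] by (simp_all add: h12_def h23_def h31_def algebra_simps)
  from divided_log_derivatives[OF nz(5,2,3) this]
  have A: "(px h23 z / h23 z - px h31 z / h31 z) / (h1 z - h2 z) = - G z"
    by (simp add: G_def h12_def)
  note expansion = web_connection_expansion[OF nz(1,2,3,4), of "px h23 z" "py h23 z" b "py h1 z"
      "px h31 z" "py h31 z" "py h2 z", unfolded A]
  show "eta_dy z = eta_dy_reg z + of_nat (Suc b) / snd z + G z / snd z ^ Suc b"
    using expansion(1) by (simp add: eta_dy_def ext_d_wt py_wt eta_dy_reg_def h12_def)
  show "eta_dx z = eta_dx_reg z"
    using expansion(2) by (simp add: eta_dx_def eta_dy_def ext_d_wt py_wt eta_dx_reg_def eta_dy_reg_def h12_def)
qed

lemma sep_holo_regular_parts: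
  assumes W: "open W" "W \<subseteq> U" and nz: "\<And>z. z \<in> W \<Longrightarrow> h12 z \<noteq> 0 \<and> h23 z \<noteq> 0 \<and> h31 z \<noteq> 0"
  shows "sep_holo G W" "sep_holo eta_dy_reg W" "sep_holo eta_dx_reg W"
proof -
  have restrict: "sep_holo f W" if "sep_holo f U" for f
    using sep_holo_subset[OF that W] .
  note basic = restrict[OF sep_holo_h1] restrict[OF sep_holo_h2] restrict[OF sep_holo_differences(1)]
    restrict[OF sep_holo_differences(2)] restrict[OF sep_holo_differences(3)]
  show G: "sep_holo G W"
    unfolding G_def using nz by (intro sep_holo_divide sep_holo_diff sep_holo_mult sep_holo_px basic) auto
  show reg: "sep_holo eta_dy_reg W"
    unfolding eta_dy_reg_def using nz
    by (intro sep_holo_divide sep_holo_add sep_holo_diff sep_holo_mult sep_holo_py basic) auto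
  show "sep_holo eta_dx_reg W"
    unfolding eta_dx_reg_def using nz
    by (intro sep_holo_add sep_holo_diff sep_holo_divide sep_holo_mult sep_holo_px sep_holo_py
        sep_holo_snd_power_mult basic G reg sep_holo_power sep_holo_snd W(1)) auto
qed

lemma curvature_decomposition:
  assumes W: "open W" "W \<subseteq> U" and nz: "\<And>z. z \<in> W \<Longrightarrow> h12 z \<noteq> 0 \<and> h23 z \<noteq> 0 \<and> h31 z \<noteq> 0"
    and z: "z \<in> W \<inter> V"
  shows "curvature z = px G z / snd z ^ Suc b + (px eta_dy_reg z - py eta_dx_reg z)"
proof -
  define WV where "WV = W \<inter> V"
  have WV: "open WV" "z \<in> WV" "WV \<subseteq> W"
    using W(1) open_V z by (auto simp: WV_def)
  have y: "snd w \<noteq> 0" if "w \<in> WV" for w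
    using that V_nonzero by (auto simp: WV_def)
  note regular = sep_holo_regular_parts[OF W nz]
  have sep: "sep_holo G WV" "sep_holo eta_dy_reg WV" "sep_holo (\<lambda>w. of_nat (Suc b) / snd w) WV"
    "sep_holo (\<lambda>w. snd w ^ Suc b) WV"
    using sep_holo_subset[OF regular(1) WV(1,3)] sep_holo_subset[OF regular(2) WV(1,3)]
      sep_holo_divide[OF sep_holo_const sep_holo_snd y] sep_holo_power[OF sep_holo_snd] WV(1)
    by blast+
  have "px eta_dy z = px (\<lambda>w. eta_dy_reg w + of_nat (Suc b) / snd w + G w / snd w ^ Suc b) z"
    using eta_expansion(1) by (intro px_cong[OF WV(1,2)]) (auto simp: WV_def)
  also have "\<dots> = px eta_dy_reg z + px (\<lambda>w. of_nat (Suc b) / snd w) z + px (\<lambda>w. G w / snd w ^ Suc b) z"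
    using px_add[OF sep_holo_add[OF sep(2,3)] sep_holo_divide[OF sep(1,4)] WV(2)]
      px_add[OF sep(2,3) WV(2)] y by simp
  also have "\<dots> = px eta_dy_reg z + px G z / snd z ^ Suc b"
    using px_divide[OF sep(1,4) WV(2)] px_snd_only[of "\<lambda>y. of_nat (Suc b) / y" z]
      px_snd_only[of "\<lambda>y. y ^ Suc b" z] y[OF WV(2)]
    by (simp add: power2_eq_square)
  finally have "px eta_dy z = px eta_dy_reg z + px G z / snd z ^ Suc b" .
  moreover have "py eta_dx z = py eta_dx_reg z"
    using eta_expansion(2) by (intro py_cong[OF WV(1,2)]) (auto simp: WV_def)
  ultimately show ?thesis
    by (simp add: curvature_def ext_d_def)
qed

lemma generic_points_of_axis:
  assumes U0: "0 \<in> U" and ndvd: "\<not> y_dvd_germ h12" "\<not> y_dvd_germ h23" "\<not> y_dvd_germ h31"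
  obtains r0 S0 where "r0 > 0" "finite S0"
    "\<And>x0. cmod x0 < r0 \<Longrightarrow> x0 \<notin> S0 \<Longrightarrow>
      \<exists>e>0. ball (x0, 0) e \<subseteq> U \<and> (\<forall>z\<in>ball (x0, 0) e. h12 z \<noteq> 0 \<and> h23 z \<noteq> 0 \<and> h31 z \<noteq> 0)"
proof -
  obtain \<rho> where \<rho>: "\<rho> > 0" "ball 0 \<rho> \<subseteq> U"
    using sep_holo_open[OF sep_holo_h1] U0 open_contains_ball by blast
  define S0 where "S0 = {x \<in> cball 0 (\<rho> / 2). h12 (x, 0) = 0} \<union> {x \<in> cball 0 (\<rho> / 2). h23 (x, 0) = 0}
    \<union> {x \<in> cball 0 (\<rho> / 2). h31 (x, 0) = 0}"
  have "finite S0"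
    unfolding S0_def using finite_zeros_on_x_axis[OF sep_holo_differences(1) \<rho> ndvd(1)]
      finite_zeros_on_x_axis[OF sep_holo_differences(2) \<rho> ndvd(2)]
      finite_zeros_on_x_axis[OF sep_holo_differences(3) \<rho> ndvd(3)] by blast
  define W where "W = (U \<inter> h12 -` (- {0})) \<inter> (U \<inter> h23 -` (- {0})) \<inter> (U \<inter> h31 -` (- {0}))"
  have "open W"
    unfolding W_def using sep_holo_differences by (intro open_Int open_nonvanishing)
  have "\<exists>e>0. ball (x0, 0) e \<subseteq> U \<and> (\<forall>z\<in>ball (x0, 0) e. h12 z \<noteq> 0 \<and> h23 z \<noteq> 0 \<and> h31 z \<noteq> 0)"
    if "cmod x0 < \<rho> / 2" "x0 \<notin> S0" for x0
  proof -
    have "(x0, 0) \<in> U"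
      using \<rho> that by (auto simp: norm_Pair)
    then have "(x0, 0) \<in> W"
      using that by (auto simp: W_def S0_def)
    then obtain e where "e > 0" "ball (x0, 0) e \<subseteq> W"
      using \<open>open W\<close> open_contains_ball by blast
    then show ?thesis
      by (auto simp: W_def)
  qed
  then show ?thesis
    using that[of "\<rho> / 2" S0] \<rho> \<open>finite S0\<close> by auto
qed

theorem curvature_criterion:
  assumes U0: "0 \<in> U" and ndvd: "\<not> y_dvd_germ h12" "\<not> y_dvd_germ h23" "\<not> y_dvd_germ h31"
  shows "(\<exists>K. web_curvature V w1 w2 w3 K) \<and>
    (\<forall>K. web_curvature V w1 w2 w3 K \<longrightarrow> (holo_along_y0 V K \<longleftrightarrow> ypow_dvd_along_y0 (Suc b) V (px G)))"
proof (intro conjI allI impI exI[of _ curvature] curvature_is_web_curvature)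
  fix K assume K: "web_curvature V w1 w2 w3 K"
  obtain r0 S0 where "r0 > 0" "finite S0" and generic: "\<And>x0. cmod x0 < r0 \<Longrightarrow> x0 \<notin> S0 \<Longrightarrow>
      \<exists>e>0. ball (x0, 0) e \<subseteq> U \<and> (\<forall>z\<in>ball (x0, 0) e. h12 z \<noteq> 0 \<and> h23 z \<noteq> 0 \<and> h31 z \<noteq> 0)"
    using generic_points_of_axis[OF U0 ndvd] by blast
  show "holo_along_y0 V K \<longleftrightarrow> ypow_dvd_along_y0 (Suc b) V (px G)"
  proof (rule holo_along_y0_iff_ypow_dvd[OF _ \<open>r0 > 0\<close> \<open>finite S0\<close>])
    fix x0 assume "cmod x0 < r0" "x0 \<notin> S0"
    then obtain e where e: "e > 0" "ball (x0, 0) e \<subseteq> U"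
      "\<And>z. z \<in> ball (x0, 0) e \<Longrightarrow> h12 z \<noteq> 0 \<and> h23 z \<noteq> 0 \<and> h31 z \<noteq> 0"
      using generic by blast
    show "\<exists>e>0. \<exists>H. sep_holo H (ball (x0, 0) e) \<and>
        (\<forall>z\<in>ball (x0, 0) e \<inter> V. K z = px G z / snd z ^ Suc b + H z)"
      using e sep_holo_regular_parts[OF open_ball e(2,3)] curvature_unique[OF K]
        curvature_decomposition[OF open_ball e(2,3)]
      by (intro exI[of _ e] exI[of _ "\<lambda>z. px eta_dy_reg z - py eta_dx_reg z"])
        (auto intro: sep_holo_diff sep_holo_px sep_holo_py)
  qed (use V_nonzero in blast)
qed

end

theorem mainTheorem7:
  fixes h1 h2 h3 :: "complex \<times> complex \<Rightarrow> complex" and U :: "(complex \<times> complex) set"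
    and a :: nat
  assumes U: "open U" "0 \<in> U"
    and holo: "holo2 h1 U" "holo2 h2 U" "holo2 h3 U"
    and a: "a > 0"
    and ndvd: "\<not> y_dvd_germ (\<lambda>z. h1 z - h2 z)" "\<not> y_dvd_germ (\<lambda>z. h2 z - h3 z)"
              "\<not> y_dvd_germ (\<lambda>z. h3 z - h1 z)"
  defines "w1 \<equiv> ((\<lambda>z. (snd z) ^ a * h1 z), (\<lambda>z. 1)) :: form1"
    and "w2 \<equiv> ((\<lambda>z. (snd z) ^ a * h2 z), (\<lambda>z. 1)) :: form1"
    and "w3 \<equiv> ((\<lambda>z. (snd z) ^ a * h3 z), (\<lambda>z. 1)) :: form1"
    and "h12 \<equiv> (\<lambda>z. h1 z - h2 z)" and "h23 \<equiv> (\<lambda>z. h2 z - h3 z)" and "h31 \<equiv> (\<lambda>z. h3 z - h1 z)"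
    and "V \<equiv> {z \<in> U. snd z \<noteq> 0 \<and> h1 z \<noteq> h2 z \<and> h2 z \<noteq> h3 z \<and> h3 z \<noteq> h1 z}"
  shows "(\<exists>K. web_curvature V w1 w2 w3 K) \<and>
         (\<forall>K. web_curvature V w1 w2 w3 K \<longrightarrow>
            (holo_along_y0 V K \<longleftrightarrow>
             ypow_dvd_along_y0 a V
               (px (\<lambda>z. (h12 z * px h23 z - h23 z * px h12 z) / (h12 z * h23 z * h31 z)))))"
proof -
  obtain b where a_eq: "a = Suc b"
    using a by (cases a) auto
  interpret web: three_web h1 h2 h3 U b
    by unfold_locales (intro holo2_imp_sep_holo holo)+
  have "w1 = web.w1" "w2 = web.w2" "w3 = web.w3" "V = web.V"
    "(\<lambda>z. (h12 z * px h23 z - h23 z * px h12 z) / (h12 z * h23 z * h31 z)) = web.G"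
    by (simp_all add: w1_def w2_def w3_def web.w1_def web.w2_def web.w3_def a_eq V_def web.V_def
        h12_def h23_def h31_def web.G_def web.h12_def web.h23_def web.h31_def)
  moreover have "\<not> y_dvd_germ web.h12" "\<not> y_dvd_germ web.h23" "\<not> y_dvd_germ web.h31"
    using ndvd by (simp_all add: web.h12_def web.h23_def web.h31_def)
  ultimately show ?thesis
    using web.curvature_criterion[OF U(2)] a_eq by simp
qed

end
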